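(* Let $\Pi_n$ be the $\Lambda$-coalescent restricted to $\{1,\dots,n\}$ started from $n$ singletons, and $T^n_m=\inf\{t\ge0:\#\Pi_n(t)\le m\}$. Let $(\hat T_i)_{i\ge2}$ be independent random variables with $\hat T_i$ distributed as $T^i_{i-1}$. Then for any $n>m$ and any $t>0$, $$\mathbb{P}(T^n_m\ge t)\le\mathbb{P}\Big(\sum_{i=m+1}^n\hat T_i\ge t\Big).$$
   Context: $\Lambda$ is a finite measure on $[0,1]$, $\lambda_{b,k}=\int_{[0,1]}x^{k-2}(1-x)^{b-k}\Lambda(dx)$ for $2\le k\le b$. The $\Lambda$-coalescent restricted to $\{1,\dots,n\}$ is the Markov chain on partitions of $\{1,\dots,n\}$ in which, when there are $b$ blocks, each $k$-tuple of blocks ($2\le k\le b$) independently merges into a single block at rate $\lambda_{b,k}$; $\#\Pi_n(t)$ is its number of blocks, and $\inf\emptyset=\infty$. *)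

theory Defs
  imports "HOL-Probability.Probability"
begin

definition lambda_measure :: "real measure \<Rightarrow> bool" where
  "lambda_measure \<Lambda> \<longleftrightarrow> finite_measure \<Lambda> \<and> sets \<Lambda> = sets borel
      \<and> emeasure \<Lambda> (- {0..1}) = 0"

text \<open>lambda_{b,k} = integral of x^(k-2) (1-x)^(b-k) against Lambda (0^0 = 1).\<close>
definition lam :: "real measure \<Rightarrow> nat \<Rightarrow> nat \<Rightarrow> real" where
  "lam \<Lambda> b k = (\<integral>x. x ^ (k - 2) * (1 - x) ^ (b - k) \<partial>\<Lambda>)"

definition partitions_of :: "nat \<Rightarrow> nat set set set" where
  "partitions_of n = {P. partition_on {1..n} P}"

definition singletons :: "nat \<Rightarrow> nat set set" where
  "singletons n = {{j} | j. j \<in> {1..n}}"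

definition merge :: "nat set set \<Rightarrow> nat set set \<Rightarrow> nat set set" where
  "merge P K = insert (\<Union>K) (P - K)"

text \<open>Generator (Q-matrix) of the Lambda-coalescent: each k-tuple K of the b
  blocks of P (2 \<le> k \<le> b) merges at rate lambda_{b,k}; diagonal entries are
  minus the total jump rate.\<close>
definition coal_gen :: "real measure \<Rightarrow> nat set set \<Rightarrow> nat set set \<Rightarrow> real" where
  "coal_gen \<Lambda> P P' =
     (\<Sum>K\<in>{K. K \<subseteq> P \<and> 2 \<le> card K \<and> merge P K = P'}. lam \<Lambda> (card P) (card K))
     - (if P = P' then (\<Sum>K\<in>{K. K \<subseteq> P \<and> 2 \<le> card K}. lam \<Lambda> (card P) (card K)) else 0)"

fun Qpow :: "'s set \<Rightarrow> ('s \<Rightarrow> 's \<Rightarrow> real) \<Rightarrow> nat \<Rightarrow> 's \<Rightarrow> 's \<Rightarrow> real" where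
  "Qpow S Q 0 x y = (if x = y then 1 else 0)"
| "Qpow S Q (Suc k) x y = (\<Sum>z\<in>S. Q x z * Qpow S Q k z y)"

definition trans_fun :: "'s set \<Rightarrow> ('s \<Rightarrow> 's \<Rightarrow> real) \<Rightarrow> real \<Rightarrow> 's \<Rightarrow> 's \<Rightarrow> real" where
  "trans_fun S Q t x y = (\<Sum>k. t ^ k / fact k * Qpow S Q k x y)"

text \<open>X is (a version of) the Lambda-coalescent restricted to {1..n}, started
  from n singletons, on the probability space M: measurable marginals,
  right-continuous piecewise constant paths, and finite-dimensional
  distributions those of the continuous-time Markov chain with generator
  coal_gen started at the singleton partition.\<close>
definition is_coalescent ::
  "real measure \<Rightarrow> nat \<Rightarrow> 'a measure \<Rightarrow> (real \<Rightarrow> 'a \<Rightarrow> nat set set) \<Rightarrow> bool" where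
  "is_coalescent \<Lambda> n M X \<longleftrightarrow>
     (\<forall>t. X t \<in> measurable M (count_space UNIV)) \<and>
     (\<forall>\<omega>\<in>space M. \<forall>t\<ge>0. \<exists>e>0. \<forall>s. t \<le> s \<and> s < t + e \<longrightarrow> X s \<omega> = X t \<omega>) \<and>
     (\<forall>ts xs. sorted ts \<and> (\<forall>s\<in>set ts. 0 \<le> s) \<and> length xs = length ts \<longrightarrow>
        measure M {\<omega>\<in>space M. \<forall>i<length ts. X (ts ! i) \<omega> = xs ! i}
        = (\<Prod>i<length ts.
             trans_fun (partitions_of n) (coal_gen \<Lambda>)
               (ts ! i - (if i = 0 then 0 else ts ! (i - 1)))
               (if i = 0 then singletons n else xs ! (i - 1)) (xs ! i)))"

text \<open>T_m = inf {t \<ge> 0. #X(t) \<le> m}, with inf of the empty set = \<infinity>.\<close>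
definition hitting_time :: "(real \<Rightarrow> 'a \<Rightarrow> nat set set) \<Rightarrow> nat \<Rightarrow> 'a \<Rightarrow> ereal" where
  "hitting_time X m \<omega> = Inf ((\<lambda>s. ereal s) ` {s. 0 \<le> s \<and> card (X s \<omega>) \<le> m})"

end

theory Submission
  imports Defs
begin

text \<open>Sample the block-counting process of \<open>\<Pi>\<^sub>n\<close> on a grid of mesh \<open>h\<close>. The result is a
  Markov chain whose number of blocks never increases and which, while it has \<open>b\<close> blocks,
  stays put with probability \<open>exp (-h \<lambda>\<^sub>b)\<close>, where \<open>\<lambda>\<^sub>b\<close> is the total merger rate of
  \<open>b\<close> blocks (independent of the shape of the partition). Hence the number of grid steps needed
  to go below \<open>m + 1\<close> blocks is dominated by a sum of independent geometric variables with
  parameters \<open>exp (-h \<lambda>\<^sub>b)\<close>, \<open>m < b \<le> n\<close>. Since \<open>\<hat>T\<^sub>b\<close> is exponential with rate \<open>\<lambda>\<^sub>b\<close>,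
  \<open>\<lfloor>\<hat>T\<^sub>b / h\<rfloor>\<close> is exactly such a geometric variable, and letting \<open>h \<rightarrow> 0\<close> gives the claim.\<close>

section \<open>The generator of the coalescent\<close>

definition coal_rate :: "real measure \<Rightarrow> nat set set \<Rightarrow> real" where
  "coal_rate \<Lambda> P = (\<Sum>K\<in>{K. K \<subseteq> P \<and> 2 \<le> card K}. lam \<Lambda> (card P) (card K))"

lemma lam_nonneg:
  assumes "lambda_measure \<Lambda>"
  shows "0 \<le> lam \<Lambda> b k"
proof -
  have "- {0..1::real} \<in> null_sets \<Lambda>"
    using assms by (auto simp: lambda_measure_def null_sets_def)
  then have "AE x in \<Lambda>. x \<in> {0..1}"
    by (rule AE_I') auto
  then have "AE x in \<Lambda>. 0 \<le> x ^ (k - 2) * (1 - x) ^ (b - k)"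
    by eventually_elim auto
  then show ?thesis
    unfolding lam_def by (rule integral_nonneg_AE)
qed

lemma coal_rate_nonneg: "lambda_measure \<Lambda> \<Longrightarrow> 0 \<le> coal_rate \<Lambda> P"
  unfolding coal_rate_def by (auto intro!: sum_nonneg lam_nonneg)

lemma coal_rate_eq_if_card_eq:
  assumes "finite P" "finite P'" "card P = card P'"
  shows "coal_rate \<Lambda> P = coal_rate \<Lambda> P'"
proof -
  obtain f where f: "bij_betw f P P'"
    using finite_same_card_bij[OF assms] by blast
  have "bij_betw (image f) {K. K \<subseteq> P \<and> 2 \<le> card K} {K. K \<subseteq> P' \<and> 2 \<le> card K}"
  proof (rule bij_betw_byWitness[where f' = "image (inv_into P f)"])
    show "\<forall>K\<in>{K. K \<subseteq> P \<and> 2 \<le> card K}. inv_into P f ` f ` K = K"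
      using f by (auto intro: inv_into_image_cancel simp: bij_betw_def)
    show "\<forall>K\<in>{K. K \<subseteq> P' \<and> 2 \<le> card K}. f ` inv_into P f ` K = K"
      using image_inv_into_cancel[OF bij_betw_imp_surj_on[OF f]] by blast
    show "image f ` {K. K \<subseteq> P \<and> 2 \<le> card K} \<subseteq> {K. K \<subseteq> P' \<and> 2 \<le> card K}"
      using f by (auto simp: bij_betw_def card_image inj_on_subset)
    show "image (inv_into P f) ` {K. K \<subseteq> P' \<and> 2 \<le> card K} \<subseteq> {K. K \<subseteq> P \<and> 2 \<le> card K}"
      using bij_betw_inv_into[OF f] by (auto simp: bij_betw_def card_image inj_on_subset)
  qed
  then have "(\<Sum>K\<in>{K. K \<subseteq> P \<and> 2 \<le> card K}. lam \<Lambda> (card P') (card (f ` K)))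
      = coal_rate \<Lambda> P'"
    unfolding coal_rate_def by (rule sum.reindex_bij_betw)
  moreover have "card (f ` K) = card K" if "K \<subseteq> P" for K
    using f that by (auto simp: bij_betw_def card_image inj_on_subset)
  ultimately show ?thesis
    unfolding coal_rate_def using assms(3) by simp
qed

lemma finite_partitions_of: "finite (partitions_of n)"
  unfolding partitions_of_def by (rule finitely_many_partition_on) simp

lemma finite_if_partitions_of: "P \<in> partitions_of n \<Longrightarrow> finite P"
  unfolding partitions_of_def by (auto intro: finite_elements)

lemma singletons_eq_image: "singletons n = (\<lambda>j. {j}) ` {1..n}"
  unfolding singletons_def by auto

lemma singletons_in_partitions_of: "singletons n \<in> partitions_of n"
  unfolding partitions_of_def singletons_eq_image by (simp add: partition_on_singletons)

lemma card_singletons: "card (singletons n) = n"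
  unfolding singletons_eq_image by (simp add: card_image)

lemma coal_rate_eq_singletons:
  "P \<in> partitions_of n \<Longrightarrow> coal_rate \<Lambda> P = coal_rate \<Lambda> (singletons (card P))"
  using finite_if_partitions_of singletons_in_partitions_of card_singletons
  by (intro coal_rate_eq_if_card_eq) auto

lemma partition_on_merge:
  assumes P: "partition_on A P" and K: "K \<subseteq> P" "K \<noteq> {}"
  shows "partition_on A (merge P K)"
proof (rule partition_onI)
  show "\<Union>(merge P K) = A"
    using partition_onD1[OF P] K unfolding merge_def by blast
  have "\<Union>K \<inter> c = {}" if "c \<in> P - K" for c
    using disjointD[OF partition_onD2[OF P]] that K by blast
  then show "disjnt p q" if "p \<in> merge P K" "q \<in> merge P K" "p \<noteq> q" for p q
    using disjointD[OF partition_onD2[OF P], of p q] that unfolding merge_def disjnt_def by blast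
  obtain C where C: "C \<in> K"
    using K by blast
  then have "C \<noteq> {}"
    using partition_onD3[OF P] K by auto
  with C have "\<Union>K \<noteq> {}"
    by auto
  then show "{} \<notin> merge P K"
    using partition_onD3[OF P] unfolding merge_def by blast
qed

lemma card_merge_less:
  assumes P: "partition_on A P" "finite P" and K: "K \<subseteq> P" "2 \<le> card K"
  shows "card (merge P K) < card P"
proof -
  have "\<Union>K \<notin> P - K"
  proof
    assume U: "\<Union>K \<in> P - K"
    obtain C where C: "C \<in> K"
      using K by fastforce
    then have "C \<inter> \<Union>K = {}"
      using U K disjointD[OF partition_onD2[OF P(1)], of C "\<Union>K"] by blast
    moreover have "C \<noteq> {}"
      using C K partition_onD3[OF P(1)] by blast
    ultimately show False
      using C by blast
  qed
  moreover have "finite K"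
    using K P finite_subset by blast
  ultimately have "card (merge P K) = Suc (card P - card K)"
    unfolding merge_def using P K by (simp add: card_Diff_subset)
  then show ?thesis
    using K card_mono[OF P(2) K(1)] by simp
qed

lemma coal_gen_diag:
  assumes "P \<in> partitions_of n"
  shows "coal_gen \<Lambda> P P = - coal_rate \<Lambda> P"
proof -
  have "partition_on {1..n} P"
    using assms unfolding partitions_of_def by simp
  from card_merge_less[OF this finite_if_partitions_of[OF assms]]
  have "{K. K \<subseteq> P \<and> 2 \<le> card K \<and> merge P K = P} = {}"
    by (metis (mono_tags, lifting) empty_Collect_eq less_irrefl)
  then have "(\<Sum>K\<in>{K. K \<subseteq> P \<and> 2 \<le> card K \<and> merge P K = P}. lam \<Lambda> (card P) (card K)) = 0"
    by (simp only: sum.empty)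
  then show ?thesis
    by (simp add: coal_gen_def coal_rate_def)
qed

lemma coal_gen_nonneg: "lambda_measure \<Lambda> \<Longrightarrow> P \<noteq> P' \<Longrightarrow> 0 \<le> coal_gen \<Lambda> P P'"
  unfolding coal_gen_def by (auto intro!: sum_nonneg lam_nonneg)

lemma card_less_if_coal_gen_nonzero:
  assumes "P \<in> partitions_of n" "P \<noteq> P'" "coal_gen \<Lambda> P P' \<noteq> 0"
  shows "card P' < card P"
proof -
  have "(\<Sum>K\<in>{K. K \<subseteq> P \<and> 2 \<le> card K \<and> merge P K = P'}. lam \<Lambda> (card P) (card K)) \<noteq> 0"
    using assms(2,3) unfolding coal_gen_def by simp
  then have "{K. K \<subseteq> P \<and> 2 \<le> card K \<and> merge P K = P'} \<noteq> {}"
    by (metis sum.empty)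
  then obtain K where K: "K \<subseteq> P" "2 \<le> card K" "merge P K = P'"
    by blast
  have "partition_on {1..n} P"
    using assms(1) unfolding partitions_of_def by simp
  from card_merge_less[OF this finite_if_partitions_of[OF assms(1)] K(1,2)] K(3)
  show ?thesis by simp
qed

lemma coal_gen_row_sum:
  assumes P: "P \<in> partitions_of n"
  shows "(\<Sum>P'\<in>partitions_of n. coal_gen \<Lambda> P P') = 0"
proof -
  let ?K = "{K. K \<subseteq> P \<and> 2 \<le> card K}"
  have "finite ?K"
    using finite_if_partitions_of[OF P] by (auto intro: finite_subset[of _ "Pow P"])
  moreover have "merge P ` ?K \<subseteq> partitions_of n"
  proof (rule image_subsetI)
    fix K assume "K \<in> ?K"
    then have "K \<subseteq> P" "K \<noteq> {}"
      by auto
    with P show "merge P K \<in> partitions_of n"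
      unfolding partitions_of_def by (simp add: partition_on_merge)
  qed
  ultimately have "(\<Sum>P'\<in>partitions_of n. \<Sum>K\<in>{K \<in> ?K. merge P K = P'}. lam \<Lambda> (card P) (card K))
      = coal_rate \<Lambda> P"
    unfolding coal_rate_def by (rule sum.group[OF _ finite_partitions_of])
  moreover have "{K \<in> ?K. merge P K = P'} = {K. K \<subseteq> P \<and> 2 \<le> card K \<and> merge P K = P'}" for P'
    by auto
  moreover have "(\<Sum>P'\<in>partitions_of n. if P = P' then coal_rate \<Lambda> P else 0) = coal_rate \<Lambda> P"
    using P finite_partitions_of by simp
  ultimately show ?thesis
    unfolding coal_gen_def coal_rate_def[symmetric] sum_subtractf by simp
qed

section \<open>Uniformization of a graded generator\<close>

lemma sums_exp_real: "(\<lambda>n. (x::real) ^ n / fact n) sums exp x"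
  using exp_converges[of x] by (simp add: field_simps)

lemma binomial_sum_Suc:
  fixes a :: real and f :: "nat \<Rightarrow> real"
  shows "(\<Sum>i\<le>k. of_nat (k choose i) * a ^ (k - i) * f (Suc i))
       + (\<Sum>i\<le>k. of_nat (k choose i) * a ^ (Suc k - i) * f i)
       = (\<Sum>i\<le>Suc k. of_nat (Suc k choose i) * a ^ (Suc k - i) * f i)"
proof -
  have "(\<Sum>i\<le>k. of_nat (k choose i) * a ^ (Suc k - i) * f i)
      = (\<Sum>i\<le>Suc k. of_nat (k choose i) * a ^ (Suc k - i) * f i)"
    by simp
  also have "\<dots> = a ^ Suc k * f 0 + (\<Sum>i\<le>k. of_nat (k choose Suc i) * a ^ (k - i) * f (Suc i))"
    by (subst sum.atMost_Suc_shift) simp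
  finally have low: "(\<Sum>i\<le>k. of_nat (k choose i) * a ^ (Suc k - i) * f i)
      = a ^ Suc k * f 0 + (\<Sum>i\<le>k. of_nat (k choose Suc i) * a ^ (k - i) * f (Suc i))" .
  have "(\<Sum>i\<le>Suc k. of_nat (Suc k choose i) * a ^ (Suc k - i) * f i)
      = a ^ Suc k * f 0 + (\<Sum>i\<le>k. of_nat (Suc k choose Suc i) * a ^ (k - i) * f (Suc i))"
    by (subst sum.atMost_Suc_shift) simp
  also have "\<dots> = a ^ Suc k * f 0 + (\<Sum>i\<le>k. of_nat (k choose i) * a ^ (k - i) * f (Suc i))
      + (\<Sum>i\<le>k. of_nat (k choose Suc i) * a ^ (k - i) * f (Suc i))"
    by (simp add: sum.distrib algebra_simps)
  finally show ?thesis
    using low by simp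
qed

text \<open>Uniformization: writing \<open>Q = unif - c I\<close> with \<open>unif \<ge> 0\<close> gives
  \<open>exp (h Q) = exp (-c h) exp (h unif)\<close>, from which positivity and stochasticity are evident.\<close>
locale graded_generator =
  fixes S :: "'s set" and Q :: "'s \<Rightarrow> 's \<Rightarrow> real" and c :: real and \<rho> :: "'s \<Rightarrow> nat"
  assumes finite_S: "finite S"
    and c_nonneg: "0 \<le> c"
    and unif_nonneg: "x \<in> S \<Longrightarrow> y \<in> S \<Longrightarrow> 0 \<le> Q x y + (if x = y then c else 0)"
    and row_sum: "x \<in> S \<Longrightarrow> (\<Sum>y\<in>S. Q x y) = 0"
    and grading: "x \<in> S \<Longrightarrow> y \<in> S \<Longrightarrow> x \<noteq> y \<Longrightarrow> Q x y \<noteq> 0 \<Longrightarrow> \<rho> y < \<rho> x"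
begin

definition unif :: "'s \<Rightarrow> 's \<Rightarrow> real" where
  "unif x y = Q x y + (if x = y then c else 0)"

abbreviation unif_pow :: "nat \<Rightarrow> 's \<Rightarrow> 's \<Rightarrow> real" where
  "unif_pow j \<equiv> Qpow S unif j"

lemma unif_pow_nonneg: "x \<in> S \<Longrightarrow> 0 \<le> unif_pow j x y"
proof (induction j arbitrary: x)
  case (Suc j)
  then show ?case
    using unif_nonneg by (auto simp: unif_def intro!: sum_nonneg mult_nonneg_nonneg)
qed simp

lemma unif_pow_row_sum: "x \<in> S \<Longrightarrow> (\<Sum>y\<in>S. unif_pow j x y) = c ^ j"
proof (induction j arbitrary: x)
  case 0
  then show ?case
    using finite_S by simp
next
  case (Suc j)
  have "(\<Sum>y\<in>S. unif_pow (Suc j) x y) = (\<Sum>z\<in>S. unif x z * (\<Sum>y\<in>S. unif_pow j z y))"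
    by (simp add: sum_distrib_left) (rule sum.swap)
  also have "\<dots> = (\<Sum>z\<in>S. unif x z) * c ^ j"
    using Suc.IH by (simp add: sum_distrib_right)
  also have "(\<Sum>z\<in>S. unif x z) = c"
    using row_sum[OF Suc.prems] Suc.prems finite_S by (simp add: unif_def sum.distrib)
  finally show ?case
    by simp
qed

lemma unif_pow_le: "x \<in> S \<Longrightarrow> unif_pow j x y \<le> c ^ j"
proof (cases "y \<in> S")
  case True
  assume x: "x \<in> S"
  have "unif_pow j x y \<le> (\<Sum>y\<in>S. unif_pow j x y)"
    using True finite_S unif_pow_nonneg[OF x] by (intro member_le_sum) auto
  then show ?thesis
    using unif_pow_row_sum[OF x] by simp
next
  case False
  have "x \<in> S \<Longrightarrow> unif_pow j x y = 0"
    using False by (induction j arbitrary: x) auto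
  then show "x \<in> S \<Longrightarrow> ?thesis"
    using c_nonneg by simp
qed

lemma Qpow_eq_binomial_unif_pow:
  "x \<in> S \<Longrightarrow> Qpow S Q k x y = (\<Sum>i\<le>k. of_nat (k choose i) * (-c) ^ (k - i) * unif_pow i x y)"
proof (induction k arbitrary: x)
  case (Suc k)
  let ?F = "\<lambda>z. (\<Sum>i\<le>k. of_nat (k choose i) * (-c) ^ (k - i) * unif_pow i z y)"
  have "Qpow S Q (Suc k) x y = (\<Sum>z\<in>S. Q x z * ?F z)"
    using Suc.IH by simp
  also have "\<dots> = (\<Sum>z\<in>S. unif x z * ?F z) - (\<Sum>z\<in>S. (if x = z then c else 0) * ?F z)"
    unfolding unif_def by (simp add: distrib_right sum.distrib)
  also have "(\<Sum>z\<in>S. (if x = z then c else 0) * ?F z) = c * ?F x"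
    using Suc.prems finite_S by (simp add: if_distrib[of "\<lambda>a. a * _"] cong: if_cong)
  also have "(\<Sum>z\<in>S. unif x z * ?F z)
      = (\<Sum>i\<le>k. of_nat (k choose i) * (-c) ^ (k - i) * unif_pow (Suc i) x y)"
    by (simp add: sum_distrib_left sum_distrib_right algebra_simps) (rule sum.swap)
  also have "c * ?F x = - (\<Sum>i\<le>k. of_nat (k choose i) * (-c) ^ (Suc k - i) * unif_pow i x y)"
    by (simp add: sum_distrib_left Suc_diff_le algebra_simps sum_negf)
  finally show ?case
    using binomial_sum_Suc[of k "-c" "\<lambda>i. unif_pow i x y"] by simp
qed simp

lemma summable_unif_pow_series: "x \<in> S \<Longrightarrow> summable (\<lambda>j. norm (h ^ j / fact j * unif_pow j x y))"
proof (rule summable_comparison_test[OF _ sums_summable[OF sums_exp_real[of "\<bar>h\<bar> * c"]]])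
  assume x: "x \<in> S"
  have "norm (norm (h ^ j / fact j * unif_pow j x y)) = \<bar>h\<bar> ^ j / fact j * unif_pow j x y" for j
    using unif_pow_nonneg[OF x] by (simp add: abs_mult power_abs)
  also have "\<dots> j \<le> \<bar>h\<bar> ^ j / fact j * c ^ j" for j
    using unif_pow_le[OF x] by (intro mult_left_mono) auto
  also have "\<dots> j = (\<bar>h\<bar> * c) ^ j / fact j" for j
    by (simp add: power_mult_distrib)
  finally show "\<exists>N. \<forall>j\<ge>N. norm (norm (h ^ j / fact j * unif_pow j x y)) \<le> (\<bar>h\<bar> * c) ^ j / fact j"
    by blast
qed

lemma trans_fun_eq_uniformization:
  assumes x: "x \<in> S"
  shows "trans_fun S Q h x y = exp (- c * h) * (\<Sum>j. h ^ j / fact j * unif_pow j x y)"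
proof -
  define a where "a j = h ^ j / fact j * unif_pow j x y" for j
  define b where "b j = (- c) ^ j * h ^ j / fact j" for j
  have "summable (\<lambda>j. norm (a j))"
    unfolding a_def by (rule summable_unif_pow_series[OF x])
  moreover have "summable (\<lambda>j. norm (b j))"
    using sums_summable[OF sums_exp_real[of "\<bar>c * h\<bar>"]]
    by (simp add: b_def abs_mult power_abs power_mult_distrib)
  ultimately have "(\<lambda>k. \<Sum>i\<le>k. a i * b (k - i)) sums (suminf a * suminf b)"
    by (rule Cauchy_product_sums)
  moreover have "(\<Sum>i\<le>k. a i * b (k - i)) = h ^ k / fact k * Qpow S Q k x y" for k
  proof -
    have "a i * b (k - i) = h ^ k / fact k * (of_nat (k choose i) * (-c) ^ (k - i) * unif_pow i x y)"
      if "i \<le> k" for i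
    proof -
      have "h ^ k = h ^ i * h ^ (k - i)"
        using that by (simp add: power_add[symmetric])
      then show ?thesis
        unfolding a_def b_def binomial_fact[OF that] by (simp add: power_mult_distrib field_simps)
    qed
    then show ?thesis
      by (simp add: Qpow_eq_binomial_unif_pow[OF x] sum_distrib_left)
  qed
  moreover have "suminf b = exp (- c * h)"
    unfolding b_def power_mult_distrib[symmetric] using sums_exp_real sums_unique by metis
  ultimately have "(\<lambda>k. h ^ k / fact k * Qpow S Q k x y) sums (suminf a * exp (- c * h))"
    by simp
  then show ?thesis
    unfolding trans_fun_def a_def by (simp add: sums_iff mult.commute)
qed

lemma trans_fun_nonneg:
  assumes x: "x \<in> S" and h: "0 \<le> h"
  shows "0 \<le> trans_fun S Q h x y"
proof -
  have "0 \<le> (\<Sum>j. h ^ j / fact j * unif_pow j x y)"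
    by (rule suminf_nonneg[OF summable_unif_pow_series[OF x, THEN summable_norm_cancel]])
       (use h unif_pow_nonneg[OF x] in auto)
  then show ?thesis
    unfolding trans_fun_eq_uniformization[OF x] by simp
qed

lemma trans_fun_row_sum:
  assumes x: "x \<in> S"
  shows "(\<Sum>y\<in>S. trans_fun S Q h x y) = 1"
proof -
  have "(\<Sum>y\<in>S. \<Sum>j. h ^ j / fact j * unif_pow j x y) = (\<Sum>j. \<Sum>y\<in>S. h ^ j / fact j * unif_pow j x y)"
    by (rule suminf_sum[symmetric]) (rule summable_unif_pow_series[OF x, THEN summable_norm_cancel])
  also have "\<dots> = (\<Sum>j. (h * c) ^ j / fact j)"
  proof -
    have "(\<Sum>y\<in>S. h ^ j / fact j * unif_pow j x y) = h ^ j / fact j * (\<Sum>y\<in>S. unif_pow j x y)" for j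
      by (rule sum_distrib_left[symmetric])
    then have "(\<Sum>y\<in>S. h ^ j / fact j * unif_pow j x y) = (h * c) ^ j / fact j" for j
      using unif_pow_row_sum[OF x] by (simp add: power_mult_distrib)
    then show ?thesis
      by simp
  qed
  also have "\<dots> = exp (h * c)"
    using sums_exp_real sums_unique by metis
  finally show ?thesis
    by (simp add: trans_fun_eq_uniformization[OF x] sum_distrib_left[symmetric] exp_add[symmetric])
qed

lemma unif_pow_eq_0_if_not_lower: "x \<in> S \<Longrightarrow> y \<noteq> x \<Longrightarrow> \<rho> x \<le> \<rho> y \<Longrightarrow> unif_pow j x y = 0"
proof (induction j arbitrary: x)
  case (Suc j)
  have "unif x z * unif_pow j z y = 0" if z: "z \<in> S" for z
  proof (cases "z = x \<or> unif x z = 0")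
    case True
    then show ?thesis
      using Suc by auto
  next
    case False
    then have "\<rho> z < \<rho> x"
      using grading[OF Suc.prems(1) z] by (auto simp: unif_def)
    then have "y \<noteq> z" "\<rho> z \<le> \<rho> y"
      using Suc.prems by auto
    then show ?thesis
      using Suc.IH[OF z] by simp
  qed
  then have "(\<Sum>z\<in>S. unif x z * unif_pow j z y) = 0"
    by (intro sum.neutral) blast
  then show ?case
    by simp
qed simp

lemma unif_pow_diag: "x \<in> S \<Longrightarrow> unif_pow j x x = unif x x ^ j"
proof (induction j)
  case (Suc j)
  have "unif x z * unif_pow j z x = 0" if z: "z \<in> S - {x}" for z
  proof (cases "unif x z = 0")
    case False
    then have "\<rho> z < \<rho> x"
      using grading[OF Suc.prems, of z] z by (auto simp: unif_def)
    then show ?thesis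
      using unif_pow_eq_0_if_not_lower[of z x j] z by auto
  qed simp
  then have "(\<Sum>z\<in>S - {x}. unif x z * unif_pow j z x) = 0"
    by (intro sum.neutral) blast
  then have "unif_pow (Suc j) x x = unif x x * unif_pow j x x"
    using Suc.prems finite_S by (simp add: sum.remove[of S x])
  then show ?case
    using Suc by simp
qed simp

lemma trans_fun_diag: "x \<in> S \<Longrightarrow> trans_fun S Q h x x = exp (h * Q x x)"
proof -
  assume x: "x \<in> S"
  have "(\<Sum>j. h ^ j / fact j * unif_pow j x x) = (\<Sum>j. (h * unif x x) ^ j / fact j)"
    by (simp add: unif_pow_diag[OF x] power_mult_distrib)
  also have "\<dots> = exp (h * unif x x)"
    using sums_exp_real sums_unique by metis
  finally show ?thesis
    by (simp add: trans_fun_eq_uniformization[OF x] unif_def exp_add[symmetric] algebra_simps)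
qed

lemma trans_fun_eq_0_if_not_lower:
  "x \<in> S \<Longrightarrow> y \<noteq> x \<Longrightarrow> \<rho> x \<le> \<rho> y \<Longrightarrow> trans_fun S Q h x y = 0"
  by (simp add: trans_fun_eq_uniformization unif_pow_eq_0_if_not_lower)

lemma trans_fun_0: "x \<in> S \<Longrightarrow> trans_fun S Q 0 x y = (if x = y then 1 else 0)"
proof -
  assume x: "x \<in> S"
  have "(\<Sum>j. (0::real) ^ j / fact j * unif_pow j x y) = unif_pow 0 x y"
    by (subst suminf_finite[of "{0}"]) auto
  then show ?thesis
    by (simp add: trans_fun_eq_uniformization[OF x])
qed

end

section \<open>Graded Markov chains and sums of geometric variables\<close>

text \<open>\<open>geom_sum_tail a d N\<close> is \<open>P(G\<^sub>1 + \<dots> + G\<^sub>d \<ge> N)\<close> for independent \<open>G\<^sub>j\<close> on \<open>\<nat>\<close> with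
  \<open>P(G\<^sub>j \<ge> k) = a j ^ k\<close>, computed by conditioning on \<open>G\<^sub>d\<close>.\<close>
fun geom_sum_tail :: "(nat \<Rightarrow> real) \<Rightarrow> nat \<Rightarrow> nat \<Rightarrow> real" where
  "geom_sum_tail a 0 N = (if N = 0 then 1 else 0)"
| "geom_sum_tail a (Suc d) N
     = (\<Sum>k<N. (a (Suc d) ^ k - a (Suc d) ^ Suc k) * geom_sum_tail a d (N - k)) + a (Suc d) ^ N"

lemma geom_sum_tail_0: "geom_sum_tail a d 0 = 1"
  by (cases d) auto

declare geom_sum_tail.simps(2)[simp del]

lemma geom_sum_tail_Suc_Suc:
  "geom_sum_tail a (Suc d) (Suc N)
     = a (Suc d) * geom_sum_tail a (Suc d) N + (1 - a (Suc d)) * geom_sum_tail a d (Suc N)"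
proof -
  let ?a = "a (Suc d)"
  have "geom_sum_tail a (Suc d) (Suc N) = (1 - ?a) * geom_sum_tail a d (Suc N)
      + (\<Sum>k<N. (?a ^ Suc k - ?a ^ Suc (Suc k)) * geom_sum_tail a d (N - k)) + ?a ^ Suc N"
    unfolding geom_sum_tail.simps(2)[of a d "Suc N"] sum.lessThan_Suc_shift
    by (simp add: algebra_simps)
  also have "(\<Sum>k<N. (?a ^ Suc k - ?a ^ Suc (Suc k)) * geom_sum_tail a d (N - k))
      = ?a * (\<Sum>k<N. (?a ^ k - ?a ^ Suc k) * geom_sum_tail a d (N - k))"
    by (simp add: sum_distrib_left algebra_simps)
  finally show ?thesis
    by (simp add: algebra_simps geom_sum_tail.simps(2)[of a d N])
qed

context
  fixes a :: "nat \<Rightarrow> real"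
  assumes a_nonneg: "\<And>d. 0 \<le> a d" and a_le_1: "\<And>d. a d \<le> 1"
begin

lemma geom_sum_tail_Suc_level:
  assumes bounded: "\<And>N. 0 \<le> geom_sum_tail a d N \<and> geom_sum_tail a d N \<le> 1"
    and antimono: "\<And>N. geom_sum_tail a d (Suc N) \<le> geom_sum_tail a d N"
  shows "geom_sum_tail a d N \<le> geom_sum_tail a (Suc d) N"
    and "0 \<le> geom_sum_tail a (Suc d) N" "geom_sum_tail a (Suc d) N \<le> 1"
proof -
  let ?a = "a (Suc d)"
  have weights_nonneg: "0 \<le> ?a ^ k - ?a ^ Suc k" for k
    using a_nonneg a_le_1 by (simp add: mult_left_le_one_le)
  have weights_sum: "(\<Sum>k<N. ?a ^ k - ?a ^ Suc k) = 1 - ?a ^ N"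
    using sum_lessThan_telescope'[of "\<lambda>k. ?a ^ k" N] by simp
  have "(\<Sum>k<N. (?a ^ k - ?a ^ Suc k) * geom_sum_tail a d N) = (1 - ?a ^ N) * geom_sum_tail a d N"
    by (simp only: sum_distrib_right[symmetric] weights_sum)
  then have "geom_sum_tail a d N
      = (\<Sum>k<N. (?a ^ k - ?a ^ Suc k) * geom_sum_tail a d N) + ?a ^ N * geom_sum_tail a d N"
    by (simp add: algebra_simps)
  also have "\<dots> \<le> (\<Sum>k<N. (?a ^ k - ?a ^ Suc k) * geom_sum_tail a d (N - k)) + ?a ^ N"
  proof (intro add_mono sum_mono mult_left_mono)
    show "geom_sum_tail a d N \<le> geom_sum_tail a d (N - k)" for k
      using lift_Suc_antimono_le[of "geom_sum_tail a d"] antimono by simp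
    show "?a ^ N * geom_sum_tail a d N \<le> ?a ^ N"
      using bounded a_nonneg by (intro mult_right_le_one_le) auto
  qed (use weights_nonneg in auto)
  finally show "geom_sum_tail a d N \<le> geom_sum_tail a (Suc d) N"
    by (simp add: geom_sum_tail.simps(2))
  have "0 \<le> (\<Sum>k<N. (?a ^ k - ?a ^ Suc k) * geom_sum_tail a d (N - k))"
    using bounded weights_nonneg by (intro sum_nonneg mult_nonneg_nonneg) auto
  then show "0 \<le> geom_sum_tail a (Suc d) N"
    using a_nonneg by (simp add: geom_sum_tail.simps(2))
  have "(\<Sum>k<N. (?a ^ k - ?a ^ Suc k) * geom_sum_tail a d (N - k)) \<le> (\<Sum>k<N. ?a ^ k - ?a ^ Suc k)"
    using bounded weights_nonneg by (intro sum_mono mult_right_le_one_le) auto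
  then show "geom_sum_tail a (Suc d) N \<le> 1"
    using weights_sum by (simp add: geom_sum_tail.simps(2))
qed

lemma geom_sum_tail_props:
  "(\<forall>N. 0 \<le> geom_sum_tail a d N \<and> geom_sum_tail a d N \<le> 1)
   \<and> (\<forall>N. geom_sum_tail a d (Suc N) \<le> geom_sum_tail a d N)
   \<and> (\<forall>N. geom_sum_tail a d N \<le> geom_sum_tail a (Suc d) N)"
proof (induction d)
  case 0
  then show ?case
    using geom_sum_tail_Suc_level[of 0] by simp
next
  case (Suc d)
  then have bounded: "0 \<le> geom_sum_tail a (Suc d) N \<and> geom_sum_tail a (Suc d) N \<le> 1" for N
    using geom_sum_tail_Suc_level[of d] by blast
  have antimono: "geom_sum_tail a (Suc d) (Suc N) \<le> geom_sum_tail a (Suc d) N" for N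
  proof -
    have "geom_sum_tail a d (Suc N) \<le> geom_sum_tail a (Suc d) N"
      using Suc.IH order_trans by blast
    then have "(1 - a (Suc d)) * geom_sum_tail a d (Suc N) \<le> (1 - a (Suc d)) * geom_sum_tail a (Suc d) N"
      using a_le_1 by (intro mult_left_mono) auto
    then show ?thesis
      unfolding geom_sum_tail_Suc_Suc by (simp add: algebra_simps)
  qed
  show ?case
    using bounded antimono geom_sum_tail_Suc_level[of "Suc d"] by blast
qed

lemma geom_sum_tail_nonneg: "0 \<le> geom_sum_tail a d N"
  and geom_sum_tail_le_1: "geom_sum_tail a d N \<le> 1"
  using geom_sum_tail_props[of d] by auto

lemma geom_sum_tail_antimono: "M \<le> N \<Longrightarrow> geom_sum_tail a d N \<le> geom_sum_tail a d M"
  using lift_Suc_antimono_le[of "geom_sum_tail a d"] geom_sum_tail_props[of d] by blast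

lemma geom_sum_tail_mono_level: "e \<le> d \<Longrightarrow> geom_sum_tail a e N \<le> geom_sum_tail a d N"
  using lift_Suc_mono_le[of "\<lambda>d. geom_sum_tail a d N"] geom_sum_tail_props by blast

end

definition markov_op :: "'s set \<Rightarrow> ('s \<Rightarrow> 's \<Rightarrow> real) \<Rightarrow> ('s \<Rightarrow> real) \<Rightarrow> 's \<Rightarrow> real" where
  "markov_op S p g x = (\<Sum>y\<in>S. p x y * g y)"

locale graded_chain =
  fixes S :: "'s set" and p :: "'s \<Rightarrow> 's \<Rightarrow> real" and \<rho> :: "'s \<Rightarrow> nat"
    and m :: nat and a :: "nat \<Rightarrow> real"
  assumes finite_S: "finite S"
    and p_nonneg: "\<And>x y. x \<in> S \<Longrightarrow> 0 \<le> p x y"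
    and p_row_sum: "\<And>x. x \<in> S \<Longrightarrow> (\<Sum>y\<in>S. p x y) = 1"
    and p_diag: "\<And>x. x \<in> S \<Longrightarrow> m < \<rho> x \<Longrightarrow> p x x = a (\<rho> x - m)"
    and p_eq_0_if_not_lower: "\<And>x y. x \<in> S \<Longrightarrow> y \<noteq> x \<Longrightarrow> \<rho> x \<le> \<rho> y \<Longrightarrow> p x y = 0"
    and a_nonneg: "\<And>d. 0 \<le> a d" and a_le_1: "\<And>d. a d \<le> 1"
begin

definition dominated :: "nat \<Rightarrow> ('s \<Rightarrow> real) \<Rightarrow> bool" where
  "dominated N u \<longleftrightarrow> (\<forall>x\<in>S. 0 \<le> u x \<and> (\<rho> x \<le> m \<longrightarrow> u x = 0)
      \<and> (m < \<rho> x \<longrightarrow> u x \<le> geom_sum_tail a (\<rho> x - m) (N - (\<rho> x - m))))"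

lemma markov_op_eq_0_low:
  assumes u: "dominated N u" and x: "x \<in> S" "\<rho> x \<le> m"
  shows "markov_op S p u x = 0"
proof -
  have "p x y * u y = 0" if y: "y \<in> S" for y
    using u x y p_eq_0_if_not_lower[OF x(1), of y] unfolding dominated_def
    by (cases "y = x \<or> \<rho> x \<le> \<rho> y") auto
  then show ?thesis
    unfolding markov_op_def by (intro sum.neutral) blast
qed

lemma dominated_le_geom_sum_tail_below:
  assumes u: "dominated N u" and y: "y \<in> S" "\<rho> y \<le> m + d"
  shows "u y \<le> geom_sum_tail a d (N - d)"
proof (cases "\<rho> y \<le> m")
  case True
  then show ?thesis
    using u y geom_sum_tail_nonneg[OF a_nonneg a_le_1] unfolding dominated_def by auto
next
  case False
  then have "u y \<le> geom_sum_tail a (\<rho> y - m) (N - (\<rho> y - m))"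
    using u y unfolding dominated_def by (meson not_le)
  also have "\<dots> \<le> geom_sum_tail a d (N - (\<rho> y - m))"
    using y by (intro geom_sum_tail_mono_level[OF a_nonneg a_le_1]) linarith
  also have "\<dots> \<le> geom_sum_tail a d (N - d)"
    using y by (intro geom_sum_tail_antimono[OF a_nonneg a_le_1]) linarith
  finally show ?thesis .
qed

lemma markov_op_le_geom_sum_tail:
  assumes u: "dominated N u" and x: "x \<in> S" and d: "\<rho> x - m = Suc d"
  shows "markov_op S p u x \<le> geom_sum_tail a (Suc d) (Suc N - Suc d)"
proof -
  let ?a = "a (Suc d)" and ?G = "geom_sum_tail a"
  have pxx: "p x x = ?a"
    using p_diag[OF x] d by simp
  have "m < \<rho> x"
    using d by simp
  then have "u x \<le> ?G (\<rho> x - m) (N - (\<rho> x - m))"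
    using u x unfolding dominated_def by blast
  then have stay: "p x x * u x \<le> ?a * ?G (Suc d) (N - Suc d)"
    unfolding d pxx using a_nonneg by (simp add: mult_left_mono)
  have move: "p x y * u y \<le> p x y * ?G d (N - d)" if y: "y \<in> S - {x}" for y
  proof (cases "\<rho> x \<le> \<rho> y")
    case True
    then show ?thesis
      using p_eq_0_if_not_lower[OF x, of y] y by simp
  next
    case False
    then have "u y \<le> ?G d (N - d)"
      using y d by (intro dominated_le_geom_sum_tail_below[OF u]) auto
    then show ?thesis
      using p_nonneg[OF x] by (simp add: mult_left_mono)
  qed
  have "(\<Sum>y\<in>S - {x}. p x y) = 1 - ?a"
    using p_row_sum[OF x] finite_S x pxx by (simp add: sum.remove)
  then have move_sum: "(\<Sum>y\<in>S - {x}. p x y * ?G d (N - d)) = (1 - ?a) * ?G d (N - d)"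
    by (simp add: sum_distrib_right[symmetric])
  have "markov_op S p u x = p x x * u x + (\<Sum>y\<in>S - {x}. p x y * u y)"
    unfolding markov_op_def using finite_S x by (simp add: sum.remove)
  also have "\<dots> \<le> ?a * ?G (Suc d) (N - Suc d) + (\<Sum>y\<in>S - {x}. p x y * ?G d (N - d))"
    using stay move by (intro add_mono sum_mono) auto
  also have "\<dots> = ?a * ?G (Suc d) (N - Suc d) + (1 - ?a) * ?G d (N - d)"
    by (simp only: move_sum)
  also have "\<dots> \<le> ?G (Suc d) (Suc N - Suc d)"
  proof (cases "Suc d \<le> N")
    case True
    then have "Suc N - Suc d = Suc (N - Suc d)" "N - d = Suc (N - Suc d)"
      by auto
    then show ?thesis
      by (simp add: geom_sum_tail_Suc_Suc)
  next
    case False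
    have "?a * ?G (Suc d) (N - Suc d) + (1 - ?a) * ?G d (N - d) \<le> ?a * 1 + (1 - ?a) * 1"
      using geom_sum_tail_le_1[OF a_nonneg a_le_1] a_nonneg a_le_1
      by (intro add_mono mult_left_mono) auto
    then show ?thesis
      using False by (simp add: geom_sum_tail_0)
  qed
  finally show ?thesis .
qed

lemma dominated_markov_op: "dominated N u \<Longrightarrow> dominated (Suc N) (markov_op S p u)"
  unfolding dominated_def[of "Suc N"]
proof (intro ballI conjI impI)
  fix x assume u: "dominated N u" and x: "x \<in> S"
  have "\<forall>y\<in>S. 0 \<le> u y"
    using u unfolding dominated_def by blast
  then show "0 \<le> markov_op S p u x"
    using p_nonneg[OF x] unfolding markov_op_def by (simp add: sum_nonneg)
  show "\<rho> x \<le> m \<Longrightarrow> markov_op S p u x = 0"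
    using markov_op_eq_0_low[OF u x] .
  show "markov_op S p u x \<le> geom_sum_tail a (\<rho> x - m) (Suc N - (\<rho> x - m))" if "m < \<rho> x"
  proof -
    have d: "\<rho> x - m = Suc (\<rho> x - m - 1)"
      using that by simp
    from markov_op_le_geom_sum_tail[OF u x d] show ?thesis
      by (simp only: d[symmetric])
  qed
qed

lemma markov_op_iterate_le_geom_sum_tail:
  assumes "x \<in> S" "m < \<rho> x"
  shows "(markov_op S p ^^ N) (\<lambda>y. of_bool (m < \<rho> y)) x \<le> geom_sum_tail a (\<rho> x - m) (N - (\<rho> x - m))"
proof -
  have "dominated N ((markov_op S p ^^ N) (\<lambda>y. of_bool (m < \<rho> y)))"
  proof (induction N)
    case 0
    show ?case
      by (auto simp: dominated_def geom_sum_tail_0)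
  next
    case (Suc N)
    then show ?case
      using dominated_markov_op by simp
  qed
  then show ?thesis
    using assms unfolding dominated_def by blast
qed

end

section \<open>The coalescent process\<close>

definition coal_unif_const :: "real measure \<Rightarrow> nat \<Rightarrow> real" where
  "coal_unif_const \<Lambda> n = (\<Sum>P\<in>partitions_of n. coal_rate \<Lambda> P)"

abbreviation coal_trans :: "real measure \<Rightarrow> nat \<Rightarrow> real \<Rightarrow> nat set set \<Rightarrow> nat set set \<Rightarrow> real" where
  "coal_trans \<Lambda> n \<equiv> trans_fun (partitions_of n) (coal_gen \<Lambda>)"

lemma graded_generator_coal_gen:
  assumes \<Lambda>: "lambda_measure \<Lambda>"
  shows "graded_generator (partitions_of n) (coal_gen \<Lambda>) (coal_unif_const \<Lambda> n) card"
proof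
  show "finite (partitions_of n)"
    by (rule finite_partitions_of)
  show "0 \<le> coal_unif_const \<Lambda> n"
    unfolding coal_unif_const_def using \<Lambda> by (auto intro!: sum_nonneg coal_rate_nonneg)
  fix x y assume x: "x \<in> partitions_of n"
  show "(\<Sum>y\<in>partitions_of n. coal_gen \<Lambda> x y) = 0"
    by (rule coal_gen_row_sum[OF x])
  show "x \<noteq> y \<Longrightarrow> coal_gen \<Lambda> x y \<noteq> 0 \<Longrightarrow> card y < card x"
    using card_less_if_coal_gen_nonzero[OF x] by blast
  have "coal_rate \<Lambda> x \<le> coal_unif_const \<Lambda> n"
    unfolding coal_unif_const_def using x \<Lambda> finite_partitions_of
    by (intro member_le_sum) (auto intro: coal_rate_nonneg)
  then show "0 \<le> coal_gen \<Lambda> x y + (if x = y then coal_unif_const \<Lambda> n else 0)"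
    using coal_gen_diag[OF x] coal_gen_nonneg[OF \<Lambda>, of x y] by auto
qed

lemma coal_trans_diag:
  assumes "lambda_measure \<Lambda>" "x \<in> partitions_of n"
  shows "coal_trans \<Lambda> n h x x = exp (- h * coal_rate \<Lambda> (singletons (card x)))"
  using graded_generator.trans_fun_diag[OF graded_generator_coal_gen[OF assms(1)] assms(2)]
    coal_gen_diag[OF assms(2)] coal_rate_eq_singletons[OF assms(2)] by simp

locale lambda_coalescent = prob_space M for M :: "'a measure" +
  fixes \<Lambda> :: "real measure" and n :: nat and X :: "real \<Rightarrow> 'a \<Rightarrow> nat set set"
  assumes lambda_measure: "lambda_measure \<Lambda>" and coalescent: "is_coalescent \<Lambda> n M X"
begin

sublocale graded_generator "partitions_of n" "coal_gen \<Lambda>" "coal_unif_const \<Lambda> n" card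
  by (rule graded_generator_coal_gen[OF lambda_measure])

lemma sets_Collect_X: "{\<omega>\<in>space M. P (X s \<omega>)} \<in> sets M"
proof -
  have "X s \<in> measurable M (count_space UNIV)"
    using coalescent unfolding is_coalescent_def by blast
  then have "X s -` {x. P x} \<inter> space M \<in> sets M"
    by (rule measurable_sets) simp
  moreover have "X s -` {x. P x} \<inter> space M = {\<omega>\<in>space M. P (X s \<omega>)}"
    by auto
  ultimately show ?thesis
    by simp
qed

lemma finite_dim_distr:
  assumes "sorted ts" "\<forall>s\<in>set ts. 0 \<le> s" "length xs = length ts"
  shows "prob {\<omega>\<in>space M. \<forall>i<length ts. X (ts ! i) \<omega> = xs ! i}
        = (\<Prod>i<length ts. coal_trans \<Lambda> n (ts ! i - (if i = 0 then 0 else ts ! (i - 1)))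
               (if i = 0 then singletons n else xs ! (i - 1)) (xs ! i))"
  using coalescent assms unfolding is_coalescent_def by blast

lemma prob_X_eq: "0 \<le> s \<Longrightarrow> prob {\<omega>\<in>space M. X s \<omega> = y} = coal_trans \<Lambda> n s (singletons n) y"
  using finite_dim_distr[of "[s]" "[y]"] by simp

lemma prob_X_eq_X_eq:
  assumes "0 \<le> a" "0 \<le> b"
  shows "prob {\<omega>\<in>space M. X a \<omega> = x \<and> X (a + b) \<omega> = y}
    = coal_trans \<Lambda> n a (singletons n) x * coal_trans \<Lambda> n b x y"
proof -
  have "{\<omega>\<in>space M. \<forall>i<length [a, a + b]. X ([a, a + b] ! i) \<omega> = [x, y] ! i}
      = {\<omega>\<in>space M. X a \<omega> = x \<and> X (a + b) \<omega> = y}"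
    by (auto simp: less_Suc_eq numeral_2_eq_2)
  then show ?thesis
    using finite_dim_distr[of "[a, a + b]" "[x, y]"] assms by (simp add: numeral_2_eq_2 lessThan_Suc)
qed

lemma sets_X_eq: "{\<omega>\<in>space M. X s \<omega> = y} \<in> sets M"
  using sets_Collect_X[of "\<lambda>x. x = y"] .

lemma sets_X_in: "{\<omega>\<in>space M. X s \<omega> \<in> B} \<in> sets M"
  using sets_Collect_X[of "\<lambda>x. x \<in> B"] .

lemma prob_X_in_Int_eq_sum:
  assumes "A \<in> sets M" "finite B"
  shows "prob ({\<omega>\<in>space M. X s \<omega> \<in> B} \<inter> A) = (\<Sum>y\<in>B. prob ({\<omega>\<in>space M. X s \<omega> = y} \<inter> A))"
proof -
  have "{\<omega>\<in>space M. X s \<omega> \<in> B} \<inter> A = (\<Union>y\<in>B. {\<omega>\<in>space M. X s \<omega> = y} \<inter> A)"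
    by auto
  also have "prob \<dots> = (\<Sum>y\<in>B. prob ({\<omega>\<in>space M. X s \<omega> = y} \<inter> A))"
    using assms sets_X_eq by (intro finite_measure_finite_Union) (auto simp: disjoint_family_on_def)
  finally show ?thesis .
qed

lemma prob_X_in_eq_sum:
  assumes "0 \<le> s" "finite B"
  shows "prob {\<omega>\<in>space M. X s \<omega> \<in> B} = (\<Sum>y\<in>B. coal_trans \<Lambda> n s (singletons n) y)"
  using prob_X_in_Int_eq_sum[of "space M" B s] assms prob_X_eq
  by (simp add: Int_absorb2 sets.sets_into_space sets_X_eq sets_X_in)

lemma AE_X_in_partitions_of:
  assumes "0 \<le> s"
  shows "AE \<omega> in M. X s \<omega> \<in> partitions_of n"
proof -
  have "prob {\<omega>\<in>space M. X s \<omega> \<in> partitions_of n} = 1"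
    using prob_X_in_eq_sum[OF assms finite_partitions_of]
      trans_fun_row_sum[OF singletons_in_partitions_of] by simp
  then show ?thesis
    using prob_Collect_eq_1[OF sets_X_in] by simp
qed

lemma prob_X_in:
  assumes "0 \<le> s"
  shows "prob {\<omega>\<in>space M. P (X s \<omega>)}
    = (\<Sum>y\<in>{y\<in>partitions_of n. P y}. coal_trans \<Lambda> n s (singletons n) y)"
proof -
  have "prob {\<omega>\<in>space M. P (X s \<omega>)} = prob {\<omega>\<in>space M. X s \<omega> \<in> {y\<in>partitions_of n. P y}}"
    using AE_X_in_partitions_of[OF assms] sets_Collect_X[of P] sets_X_in
    by (intro measure_eq_AE) auto
  also have "\<dots> = (\<Sum>y\<in>{y\<in>partitions_of n. P y}. coal_trans \<Lambda> n s (singletons n) y)"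
    by (rule prob_X_in_eq_sum[OF assms]) (simp add: finite_partitions_of)
  finally show ?thesis .
qed

text \<open>Chapman-Kolmogorov, read off from the two-time marginals of \<open>X\<close>.\<close>
lemma coal_trans_add:
  assumes a: "0 \<le> a" and b: "0 \<le> b"
  shows "coal_trans \<Lambda> n (a + b) (singletons n) y
    = (\<Sum>x\<in>partitions_of n. coal_trans \<Lambda> n a (singletons n) x * coal_trans \<Lambda> n b x y)"
proof -
  let ?Y = "{\<omega>\<in>space M. X (a + b) \<omega> = y}"
  have "coal_trans \<Lambda> n (a + b) (singletons n) y = prob ?Y"
    using prob_X_eq a b by simp
  also have "\<dots> = prob ({\<omega>\<in>space M. X a \<omega> \<in> partitions_of n} \<inter> ?Y)"
    using AE_X_in_partitions_of[OF a] sets_X_eq sets_X_in by (intro measure_eq_AE) auto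
  also have "\<dots> = (\<Sum>x\<in>partitions_of n. prob ({\<omega>\<in>space M. X a \<omega> = x} \<inter> ?Y))"
    using sets_X_eq finite_partitions_of by (rule prob_X_in_Int_eq_sum)
  also have "\<dots> = (\<Sum>x\<in>partitions_of n. prob {\<omega>\<in>space M. X a \<omega> = x \<and> X (a + b) \<omega> = y})"
    by (intro sum.cong arg_cong[where f = prob]) auto
  finally show ?thesis
    using prob_X_eq_X_eq[OF a b] by simp
qed

lemma coal_trans_mult_eq_markov_op_iterate:
  assumes h: "0 \<le> h"
  shows "(\<Sum>y\<in>partitions_of n. coal_trans \<Lambda> n (real N * h) (singletons n) y * g y)
       = (markov_op (partitions_of n) (coal_trans \<Lambda> n h) ^^ N) g (singletons n)"
proof (induction N arbitrary: g)
  case 0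
  then show ?case
    using finite_partitions_of singletons_in_partitions_of
    by (simp add: trans_fun_0 if_distrib[of "\<lambda>x. x * _"] cong: if_cong)
next
  case (Suc N)
  let ?T = "coal_trans \<Lambda> n" and ?op = "markov_op (partitions_of n) (coal_trans \<Lambda> n h)"
  have "(\<Sum>y\<in>partitions_of n. ?T (real (Suc N) * h) (singletons n) y * g y)
     = (\<Sum>y\<in>partitions_of n. (\<Sum>x\<in>partitions_of n. ?T (real N * h) (singletons n) x * ?T h x y) * g y)"
    using coal_trans_add[of "real N * h" h] h by (simp add: algebra_simps)
  also have "\<dots> = (\<Sum>x\<in>partitions_of n. ?T (real N * h) (singletons n) x * ?op g x)"
    unfolding markov_op_def by (simp add: sum_distrib_left sum_distrib_right mult.assoc) (rule sum.swap)
  also have "\<dots> = (?op ^^ Suc N) g (singletons n)"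
    using Suc.IH by (simp add: funpow_Suc_right del: funpow.simps)
  finally show ?case .
qed

lemma prob_card_X_gt_le_geom_sum_tail:
  assumes h: "0 < h" and mn: "m < n"
  shows "prob {\<omega>\<in>space M. m < card (X (real N * h) \<omega>)}
     \<le> geom_sum_tail (\<lambda>d. exp (- h * coal_rate \<Lambda> (singletons (m + d)))) (n - m) (N - (n - m))"
proof -
  define a where "a d = exp (- h * coal_rate \<Lambda> (singletons (m + d)))" for d
  interpret chain: graded_chain "partitions_of n" "coal_trans \<Lambda> n h" card m a
  proof
    show "x \<in> partitions_of n \<Longrightarrow> 0 \<le> coal_trans \<Lambda> n h x y" for x y
      using trans_fun_nonneg h by simp
    show "x \<in> partitions_of n \<Longrightarrow> m < card x \<Longrightarrow> coal_trans \<Lambda> n h x x = a (card x - m)" for x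
      using coal_trans_diag[OF lambda_measure] by (simp add: a_def)
    show "a d \<le> 1" for d
      using coal_rate_nonneg[OF lambda_measure] h by (simp add: a_def)
  qed (simp_all add: finite_S trans_fun_row_sum trans_fun_eq_0_if_not_lower a_def)
  have "0 \<le> real N * h"
    using h by simp
  then have "prob {\<omega>\<in>space M. m < card (X (real N * h) \<omega>)}
      = (\<Sum>y\<in>{y\<in>partitions_of n. m < card y}. coal_trans \<Lambda> n (real N * h) (singletons n) y)"
    by (rule prob_X_in)
  also have "\<dots>
      = (\<Sum>y\<in>partitions_of n. coal_trans \<Lambda> n (real N * h) (singletons n) y * of_bool (m < card y))"
    by (subst sum.inter_filter[OF finite_partitions_of]) (simp add: of_bool_def if_distrib cong: if_cong)
  also have "\<dots> = (markov_op (partitions_of n) (coal_trans \<Lambda> n h) ^^ N) (\<lambda>y. of_bool (m < card y)) (singletons n)"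
    using coal_trans_mult_eq_markov_op_iterate h by simp
  also have "\<dots> \<le> geom_sum_tail a (n - m) (N - (n - m))"
    using chain.markov_op_iterate_le_geom_sum_tail[OF singletons_in_partitions_of] mn
    by (simp add: card_singletons)
  finally show ?thesis
    unfolding a_def .
qed

end

section \<open>Hitting times\<close>

lemma hitting_time_nonneg: "0 \<le> hitting_time X m \<omega>"
  unfolding hitting_time_def by (auto intro!: Inf_greatest)

lemma hitting_time_le: "0 \<le> u \<Longrightarrow> card (X u \<omega>) \<le> m \<Longrightarrow> hitting_time X m \<omega> \<le> ereal u"
  unfolding hitting_time_def by (auto intro!: Inf_lower)

lemma card_gt_if_ereal_le_hitting_time:
  assumes "ereal s \<le> hitting_time X m \<omega>" "0 \<le> u" "u < s"
  shows "m < card (X u \<omega>)"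
proof (rule ccontr)
  assume "\<not> m < card (X u \<omega>)"
  then have "hitting_time X m \<omega> \<le> ereal u"
    using assms(2) by (intro hitting_time_le) auto
  from order_trans[OF assms(1) this] assms(3) show False
    by simp
qed

lemma ereal_le_hitting_time_iff_rat:
  assumes right_cont: "\<forall>t\<ge>0. \<exists>e>0. \<forall>s. t \<le> s \<and> s < t + e \<longrightarrow> X s \<omega> = X t \<omega>"
  shows "ereal s \<le> hitting_time X m \<omega> \<longleftrightarrow>
    (\<forall>q::rat. 0 \<le> real_of_rat q \<and> real_of_rat q < s \<longrightarrow> m < card (X (real_of_rat q) \<omega>))"
proof
  assume "ereal s \<le> hitting_time X m \<omega>"
  then show "\<forall>q::rat. 0 \<le> real_of_rat q \<and> real_of_rat q < s \<longrightarrow> m < card (X (real_of_rat q) \<omega>)"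
    by (simp add: card_gt_if_ereal_le_hitting_time)
next
  assume rat: "\<forall>q::rat. 0 \<le> real_of_rat q \<and> real_of_rat q < s \<longrightarrow> m < card (X (real_of_rat q) \<omega>)"
  show "ereal s \<le> hitting_time X m \<omega>"
    unfolding hitting_time_def
  proof (rule Inf_greatest)
    fix x assume "x \<in> (\<lambda>s. ereal s) ` {s. 0 \<le> s \<and> card (X s \<omega>) \<le> m}"
    then obtain u where u: "x = ereal u" "0 \<le> u" "card (X u \<omega>) \<le> m"
      by auto
    show "ereal s \<le> x"
    proof (rule ccontr)
      assume "\<not> ereal s \<le> x"
      then have "u < s"
        using u by auto
      obtain e where e: "e > 0" "\<forall>v. u \<le> v \<and> v < u + e \<longrightarrow> X v \<omega> = X u \<omega>"
        using right_cont u(2) by blast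
      text \<open>A rational time just after \<open>u\<close> still sees at most \<open>m\<close> blocks.\<close>
      obtain r where r: "r \<in> \<rat>" "u < r" "r < min (u + e) s"
        using Rats_dense_in_real[of u "min (u + e) s"] e \<open>u < s\<close> by auto
      then obtain q where q: "r = real_of_rat q"
        by (auto elim: Rats_cases)
      have "u \<le> r \<and> r < u + e"
        using r by simp
      with e(2) have "X r \<omega> = X u \<omega>"
        by blast
      have "0 \<le> real_of_rat q"
        using q r u(2) by linarith
      moreover have "real_of_rat q < s"
        using q r by simp
      ultimately have "m < card (X r \<omega>)"
        using rat q by blast
      with \<open>X r \<omega> = X u \<omega>\<close> show False
        using u(3) by simp
    qed
  qed
qed

lemma sum_increments_eq_last:
  fixes ts :: "real list"
  shows "(\<Sum>i<length ts. ts ! i - (if i = 0 then 0 else ts ! (i - 1))) = (if ts = [] then 0 else last ts)"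
proof -
  define g where "g j = (if j = 0 then 0 else ts ! (j - 1))" for j
  have "(\<Sum>i<length ts. g (Suc i) - g i) = g (length ts) - g 0"
    by (rule sum_lessThan_telescope)
  then show ?thesis
    by (simp add: g_def last_conv_nth)
qed

context lambda_coalescent
begin

lemma ereal_le_hitting_time_iff_rat':
  "\<omega> \<in> space M \<Longrightarrow> ereal s \<le> hitting_time X m \<omega> \<longleftrightarrow>
    (\<forall>q::rat. 0 \<le> real_of_rat q \<and> real_of_rat q < s \<longrightarrow> m < card (X (real_of_rat q) \<omega>))"
  using coalescent unfolding is_coalescent_def by (intro ereal_le_hitting_time_iff_rat) blast

lemma sets_ereal_le_hitting_time: "{\<omega>\<in>space M. ereal s \<le> hitting_time X m \<omega>} \<in> sets M"
proof -
  have "{\<omega>\<in>space M. ereal s \<le> hitting_time X m \<omega>} = {\<omega>\<in>space M.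
      \<forall>q::rat. 0 \<le> real_of_rat q \<and> real_of_rat q < s \<longrightarrow> m < card (X (real_of_rat q) \<omega>)}"
    using ereal_le_hitting_time_iff_rat' by blast
  also have "\<dots> \<in> sets M"
    by (intro sets.sets_Collect_countable_All sets.sets_Collect_imp sets_Collect_X)
  finally show ?thesis .
qed

lemma borel_measurable_hitting_time: "hitting_time X m \<in> borel_measurable M"
proof (rule borel_measurableI_ge)
  fix y :: ereal
  show "{\<omega>\<in>space M. y \<le> hitting_time X m \<omega>} \<in> sets M"
  proof (cases y)
    case PInf
    have "y \<le> z \<longleftrightarrow> (\<forall>k::nat. ereal (real k) \<le> z)" for z
    proof (cases z)
      case (real r)
      obtain k :: nat where "r < real k"
        using reals_Archimedean2 by blast
      then show ?thesis
        using PInf real by (auto intro!: exI[of _ k])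
    qed (use PInf in auto)
    then have "{\<omega>\<in>space M. y \<le> hitting_time X m \<omega>}
        = {\<omega>\<in>space M. \<forall>k::nat. ereal (real k) \<le> hitting_time X m \<omega>}"
      by simp
    also have "\<dots> \<in> sets M"
      by (intro sets.sets_Collect_countable_All sets_ereal_le_hitting_time)
    finally show ?thesis .
  qed (use sets_ereal_le_hitting_time in simp_all)
qed

lemma prob_X_eq_singletons_on_finite_set:
  assumes s: "0 \<le> s" and F: "finite F" "F \<subseteq> {0..s}"
  shows "exp (- s * coal_rate \<Lambda> (singletons n)) \<le> prob {\<omega>\<in>space M. \<forall>t\<in>F. X t \<omega> = singletons n}"
proof -
  let ?q = "coal_rate \<Lambda> (singletons n)" and ?s1 = "singletons n"
  define ts where "ts = sorted_list_of_set F"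
  define xs where "xs = replicate (length ts) ?s1"
  have ts: "sorted ts" "set ts = F"
    unfolding ts_def using F by simp_all
  have "{\<omega>\<in>space M. \<forall>t\<in>F. X t \<omega> = ?s1} = {\<omega>\<in>space M. \<forall>i<length ts. X (ts ! i) \<omega> = xs ! i}"
    unfolding xs_def ts(2)[symmetric] by (auto simp: all_set_conv_all_nth)
  then have "prob {\<omega>\<in>space M. \<forall>t\<in>F. X t \<omega> = ?s1}
      = (\<Prod>i<length ts. coal_trans \<Lambda> n (ts ! i - (if i = 0 then 0 else ts ! (i - 1)))
               (if i = 0 then ?s1 else xs ! (i - 1)) (xs ! i))"
    using finite_dim_distr[of ts xs] ts F by (simp add: xs_def subset_iff)
  also have "\<dots> = (\<Prod>i<length ts. exp (- (ts ! i - (if i = 0 then 0 else ts ! (i - 1))) * ?q))"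
    by (intro prod.cong refl)
       (simp add: xs_def coal_trans_diag[OF lambda_measure singletons_in_partitions_of] card_singletons)
  also have "\<dots> = exp (\<Sum>i<length ts. - (ts ! i - (if i = 0 then 0 else ts ! (i - 1))) * ?q)"
    by (simp add: exp_sum)
  also have "(\<Sum>i<length ts. - (ts ! i - (if i = 0 then 0 else ts ! (i - 1))) * ?q)
      = - (if ts = [] then 0 else last ts) * ?q"
    by (simp only: sum_distrib_right[symmetric] sum_negf sum_increments_eq_last)
  finally have "prob {\<omega>\<in>space M. \<forall>t\<in>F. X t \<omega> = ?s1} = exp (- (if ts = [] then 0 else last ts) * ?q)" .
  moreover have "(if ts = [] then 0 else last ts) \<le> s"
    using s F ts(2) by (auto dest!: last_in_set)
  then have "(if ts = [] then 0 else last ts) * ?q \<le> s * ?q"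
    using coal_rate_nonneg[OF lambda_measure] by (rule mult_right_mono)
  ultimately show ?thesis
    by simp
qed

lemma prob_card_X_eq_n:
  assumes u: "0 \<le> u" and n: "1 \<le> n"
  shows "prob {\<omega>\<in>space M. n - 1 < card (X u \<omega>)} = exp (- u * coal_rate \<Lambda> (singletons n))"
proof -
  let ?s1 = "singletons n"
  have "coal_trans \<Lambda> n u ?s1 y = 0" if "y \<in> {y\<in>partitions_of n. n - 1 < card y} - {?s1}" for y
    using that card_singletons[of n] singletons_in_partitions_of
    by (intro trans_fun_eq_0_if_not_lower) auto
  moreover have "?s1 \<in> {y\<in>partitions_of n. n - 1 < card y}"
    using n card_singletons[of n] singletons_in_partitions_of by simp
  ultimately have "(\<Sum>y\<in>{y\<in>partitions_of n. n - 1 < card y}. coal_trans \<Lambda> n u ?s1 y)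
      = coal_trans \<Lambda> n u ?s1 ?s1"
    using finite_partitions_of by (simp add: sum.remove[of _ ?s1] sum.neutral)
  then show ?thesis
    using prob_X_in[OF u, of "\<lambda>y. n - 1 < card y"]
      coal_trans_diag[OF lambda_measure singletons_in_partitions_of] by (simp add: card_singletons)
qed

lemma prob_hitting_time_pred_ge_le:
  assumes n: "1 \<le> n" and s: "0 < s"
  shows "prob {\<omega>\<in>space M. ereal s \<le> hitting_time X (n - 1) \<omega>} \<le> exp (- s * coal_rate \<Lambda> (singletons n))"
proof -
  let ?q = "coal_rate \<Lambda> (singletons n)"
  define u where "u k = s - s / real (Suc (Suc k))" for k
  have u: "0 \<le> u k" "u k < s" for k
    using s by (auto simp: u_def field_simps)
  have "(\<lambda>k. exp (- u k * ?q)) \<longlonglongrightarrow> exp (- (s - 0) * ?q)"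
    unfolding u_def by (intro tendsto_intros LIMSEQ_Suc[OF LIMSEQ_Suc[OF lim_const_over_n]])
  moreover have "prob {\<omega>\<in>space M. ereal s \<le> hitting_time X (n - 1) \<omega>} \<le> exp (- u k * ?q)" for k
  proof -
    have "prob {\<omega>\<in>space M. ereal s \<le> hitting_time X (n - 1) \<omega>}
        \<le> prob {\<omega>\<in>space M. n - 1 < card (X (u k) \<omega>)}"
      using card_gt_if_ereal_le_hitting_time[OF _ u[of k]]
      by (intro finite_measure_mono sets_Collect_X) auto
    then show ?thesis
      using prob_card_X_eq_n[OF u(1) n] by simp
  qed
  ultimately show ?thesis
    by (intro LIMSEQ_le_const) auto
qed

lemma ereal_le_hitting_time_if_X_eq_singletons:
  assumes "\<omega> \<in> space M" "1 \<le> n"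
    and "\<And>q::rat. 0 \<le> real_of_rat q \<Longrightarrow> real_of_rat q < s \<Longrightarrow> X (real_of_rat q) \<omega> = singletons n"
  shows "ereal s \<le> hitting_time X (n - 1) \<omega>"
  unfolding ereal_le_hitting_time_iff_rat'[OF assms(1)] using assms(2,3) by (simp add: card_singletons)

lemma exp_le_prob_hitting_time_pred_ge:
  assumes n: "2 \<le> n" and s: "0 < s"
  shows "exp (- s * coal_rate \<Lambda> (singletons n)) \<le> prob {\<omega>\<in>space M. ereal s \<le> hitting_time X (n - 1) \<omega>}"
proof -
  let ?s1 = "singletons n"
  define D where "D = {r::rat. 0 \<le> real_of_rat r \<and> real_of_rat r < s}"
  have "D \<noteq> {}"
    using s by (auto simp: D_def intro!: exI[of _ 0])
  define f where "f = from_nat_into D"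
  have range_f: "range f = D"
    unfolding f_def using range_from_nat_into[OF \<open>D \<noteq> {}\<close>] by (simp add: countableI_type)
  define G where "G k = {\<omega>\<in>space M. \<forall>t\<in>(\<lambda>j. real_of_rat (f j)) ` {..<k}. X t \<omega> = ?s1}" for k
  have G_sets: "range G \<subseteq> sets M"
    unfolding G_def by (auto intro!: sets.sets_Collect_finite_All sets_X_eq)
  have "decseq G"
    unfolding G_def by (intro decseq_SucI) auto
  then have "(\<lambda>k. prob (G k)) \<longlonglongrightarrow> prob (\<Inter>k. G k)"
    using G_sets by (intro finite_Lim_measure_decseq) auto
  moreover have "exp (- s * coal_rate \<Lambda> ?s1) \<le> prob (G k)" for k
  proof -
    have "f j \<in> D" for j
      using range_f by blast
    then have "real_of_rat (f j) \<in> {0..s}" for j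
      unfolding D_def by (auto intro: less_imp_le)
    then show ?thesis
      unfolding G_def using s by (intro prob_X_eq_singletons_on_finite_set) auto
  qed
  ultimately have "exp (- s * coal_rate \<Lambda> ?s1) \<le> prob (\<Inter>k. G k)"
    by (intro LIMSEQ_le_const) auto
  also have "\<dots> \<le> prob {\<omega>\<in>space M. ereal s \<le> hitting_time X (n - 1) \<omega>}"
  proof (intro finite_measure_mono subsetI sets_ereal_le_hitting_time)
    fix \<omega> assume "\<omega> \<in> (\<Inter>k. G k)"
    then have space: "\<omega> \<in> space M" and X_f: "X (real_of_rat (f j)) \<omega> = ?s1" for j
      by (auto simp: G_def dest!: spec[of _ "Suc j"])
    have "X (real_of_rat q) \<omega> = ?s1" if "0 \<le> real_of_rat q" "real_of_rat q < s" for q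
    proof -
      have "q \<in> range f"
        using that unfolding range_f D_def by simp
      then show ?thesis
        using X_f by auto
    qed
    then show "\<omega> \<in> {\<omega>\<in>space M. ereal s \<le> hitting_time X (n - 1) \<omega>}"
      using space n ereal_le_hitting_time_if_X_eq_singletons by simp
  qed
  finally show ?thesis .
qed

lemma prob_hitting_time_pred_ge:
  assumes n: "2 \<le> n" and s: "0 \<le> s"
  shows "prob {\<omega>\<in>space M. ereal s \<le> hitting_time X (n - 1) \<omega>} = exp (- s * coal_rate \<Lambda> (singletons n))"
proof (cases "s = 0")
  case True
  then have "{\<omega>\<in>space M. ereal s \<le> hitting_time X (n - 1) \<omega>} = space M"
    using hitting_time_nonneg[of X "n - 1"] by (auto simp: zero_ereal_def)
  then show ?thesis
    using True prob_space by simp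
next
  case False
  then show ?thesis
    using prob_hitting_time_pred_ge_le[of s] exp_le_prob_hitting_time_pred_ge[OF n, of s] n s
    by (simp add: order_antisym)
qed

end

section \<open>Sums of independent exponential variables\<close>

context prob_space
begin

lemma prob_ge_mult_eq_pow:
  assumes tail: "\<And>s. 0 \<le> s \<Longrightarrow> prob {\<omega>\<in>space M. ereal s \<le> T \<omega>} = exp (- s * q)" and h: "0 \<le> h"
  shows "prob {\<omega>\<in>space M. ereal (real k * h) \<le> T \<omega>} = exp (- h * q) ^ k"
  using tail[of "real k * h"] h by (simp add: exp_of_nat_mult[symmetric] algebra_simps)

lemma prob_in_grid_cell:
  assumes T: "T \<in> borel_measurable M"
    and tail: "\<And>s. 0 \<le> s \<Longrightarrow> prob {\<omega>\<in>space M. ereal s \<le> T \<omega>} = exp (- s * q)" and h: "0 \<le> h"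
  shows "prob {\<omega>\<in>space M. T \<omega> \<in> {ereal (real k * h)..<ereal (real (Suc k) * h)}}
    = exp (- h * q) ^ k - exp (- h * q) ^ Suc k"
proof -
  let ?G = "\<lambda>k. {\<omega>\<in>space M. ereal (real k * h) \<le> T \<omega>}"
  have sets: "?G k \<in> sets M" for k
    using T by measurable
  have "?G (Suc k) \<subseteq> ?G k"
    using h by (auto elim: order_trans[rotated] simp: mult_right_mono)
  then have "prob (?G k - ?G (Suc k)) = prob (?G k) - prob (?G (Suc k))"
    by (rule finite_measure_Diff[OF sets sets])
  moreover have "?G k - ?G (Suc k) = {\<omega>\<in>space M. T \<omega> \<in> {ereal (real k * h)..<ereal (real (Suc k) * h)}}"
    by auto
  ultimately show ?thesis
    using prob_ge_mult_eq_pow[OF tail h, of k] prob_ge_mult_eq_pow[OF tail h, of "Suc k"] by simp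
qed

lemma sum_prob_grid_cells_le_prob_add:
  fixes T W :: "'a \<Rightarrow> ereal"
  assumes T[measurable]: "T \<in> borel_measurable M" and W[measurable]: "W \<in> borel_measurable M"
    and h: "0 < h"
  shows "(\<Sum>k<K. prob {\<omega>\<in>space M. T \<omega> \<in> {ereal (real k * h)..<ereal (real (Suc k) * h)}
      \<and> W \<omega> \<in> {ereal (real (K - k) * h)..}})
    + prob {\<omega>\<in>space M. T \<omega> \<in> {ereal (real K * h)..} \<and> W \<omega> \<in> {0..}}
    \<le> prob {\<omega>\<in>space M. ereal (real K * h) \<le> W \<omega> + T \<omega>}"
proof -
  define E where "E k = {\<omega>\<in>space M. T \<omega> \<in> {ereal (real k * h)..<ereal (real (Suc k) * h)}
    \<and> W \<omega> \<in> {ereal (real (K - k) * h)..}}" for k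
  define E' where "E' = {\<omega>\<in>space M. T \<omega> \<in> {ereal (real K * h)..} \<and> W \<omega> \<in> {0..}}"
  have E_sets: "E k \<in> sets M" for k
    unfolding E_def by measurable
  have E'_sets: "E' \<in> sets M"
    unfolding E'_def by measurable
  have "(\<Sum>k<K. prob (E k)) + prob E' = prob ((\<Union>k<K. E k) \<union> E')"
  proof -
    have "E i \<inter> E j = {}" if "i \<noteq> j" for i j
    proof (rule ccontr)
      assume "E i \<inter> E j \<noteq> {}"
      then obtain \<omega> where "\<omega> \<in> E i" "\<omega> \<in> E j"
        by blast
      then have "ereal (real i * h) < ereal (real (Suc j) * h)" "ereal (real j * h) < ereal (real (Suc i) * h)"
        unfolding E_def by (auto dest: le_less_trans)
      then show False
        using h \<open>i \<noteq> j\<close> by simp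
    qed
    then have "disjoint_family_on E {..<K}"
      by (simp add: disjoint_family_on_def)
    then have "prob (\<Union>k<K. E k) = (\<Sum>k<K. prob (E k))"
      using E_sets by (intro finite_measure_finite_Union) auto
    moreover have "(\<Union>k<K. E k) \<inter> E' = {}"
    proof safe
      fix \<omega> k assume "k < K" "\<omega> \<in> E k" "\<omega> \<in> E'"
      then have "ereal (real K * h) < ereal (real (Suc k) * h)"
        unfolding E_def E'_def by (auto dest: le_less_trans)
      then show "\<omega> \<in> {}"
        using h \<open>k < K\<close> by simp
    qed
    ultimately show ?thesis
      using E_sets E'_sets by (simp add: finite_measure_Union sets.finite_UN)
  qed
  also have "\<dots> \<le> prob {\<omega>\<in>space M. ereal (real K * h) \<le> W \<omega> + T \<omega>}"
  proof (intro finite_measure_mono subsetI)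
    fix \<omega> assume "\<omega> \<in> (\<Union>k<K. E k) \<union> E'"
    then show "\<omega> \<in> {\<omega>\<in>space M. ereal (real K * h) \<le> W \<omega> + T \<omega>}"
    proof
      assume "\<omega> \<in> (\<Union>k<K. E k)"
      then obtain k where k: "k < K" "\<omega> \<in> E k"
        by blast
      then have "ereal (real (K - k) * h) + ereal (real k * h) \<le> W \<omega> + T \<omega>"
        unfolding E_def by (intro add_mono) auto
      moreover have "real (K - k) * h + real k * h = real K * h"
        using k by (simp add: of_nat_diff algebra_simps)
      ultimately show ?thesis
        using k unfolding E_def by simp
    next
      assume "\<omega> \<in> E'"
      then have "0 + ereal (real K * h) \<le> W \<omega> + T \<omega>"
        unfolding E'_def by (intro add_mono) auto
      then show ?thesis
        using \<open>\<omega> \<in> E'\<close> unfolding E'_def by simp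
    qed
  qed measurable
  finally show ?thesis
    unfolding E_def E'_def .
qed

text \<open>Adding an independent exponential summand of rate \<open>q\<close> adds a geometric summand of
  parameter \<open>exp (- h q)\<close>: split according to the grid cell \<open>[k h, (k + 1) h)\<close> containing \<open>T\<close>.\<close>
lemma geom_sum_tail_Suc_le_prob_add:
  fixes T W :: "'a \<Rightarrow> ereal"
  assumes indep: "indep_var borel T borel W"
    and tail: "\<And>s. 0 \<le> s \<Longrightarrow> prob {\<omega>\<in>space M. ereal s \<le> T \<omega>} = exp (- s * q)"
    and h: "0 < h" and a: "a (Suc d) = exp (- h * q)"
    and le_W: "\<And>N. geom_sum_tail a d N \<le> prob {\<omega>\<in>space M. ereal (real N * h) \<le> W \<omega>}"
  shows "geom_sum_tail a (Suc d) K \<le> prob {\<omega>\<in>space M. ereal (real K * h) \<le> W \<omega> + T \<omega>}"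
proof -
  let ?\<alpha> = "a (Suc d)"
  have T[measurable]: "T \<in> borel_measurable M" and W[measurable]: "W \<in> borel_measurable M"
    using indep_var_rv1[OF indep] indep_var_rv2[OF indep] by auto
  have prob_Int: "prob {\<omega>\<in>space M. T \<omega> \<in> A \<and> W \<omega> \<in> B}
      = prob {\<omega>\<in>space M. T \<omega> \<in> A} * prob {\<omega>\<in>space M. W \<omega> \<in> B}"
    if "A \<in> sets borel" "B \<in> sets borel" for A B
    using indep_varD[OF indep that] by (simp add: vimage_def Int_def conj_commute)
  have "0 \<le> q"
    using tail[of 1] prob_le_1[of "{\<omega>\<in>space M. ereal 1 \<le> T \<omega>}"] by simp
  then have \<alpha>: "0 \<le> ?\<alpha>" "?\<alpha> \<le> 1"
    using h a by simp_all
  define E where "E k = {\<omega>\<in>space M. T \<omega> \<in> {ereal (real k * h)..<ereal (real (Suc k) * h)}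
    \<and> W \<omega> \<in> {ereal (real (K - k) * h)..}}" for k
  define E' where "E' = {\<omega>\<in>space M. T \<omega> \<in> {ereal (real K * h)..} \<and> W \<omega> \<in> {0..}}"
  have "(?\<alpha> ^ k - ?\<alpha> ^ Suc k) * geom_sum_tail a d (K - k) \<le> prob (E k)" for k
  proof -
    have "prob (E k) = (?\<alpha> ^ k - ?\<alpha> ^ Suc k) * prob {\<omega>\<in>space M. ereal (real (K - k) * h) \<le> W \<omega>}"
      unfolding E_def prob_Int[OF atLeastLessThan_borel borel_closed[OF closed_atLeast]]
      using prob_in_grid_cell[OF T tail] h a by simp
    moreover have "0 \<le> ?\<alpha> ^ k - ?\<alpha> ^ Suc k"
      using \<alpha> by (simp add: mult_left_le_one_le)
    ultimately show ?thesis
      using le_W by (simp add: mult_left_mono)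
  qed
  moreover have "?\<alpha> ^ K \<le> prob E'"
  proof -
    have "1 \<le> prob {\<omega>\<in>space M. 0 \<le> W \<omega>}"
      using le_W[of 0] by (simp add: geom_sum_tail_0 zero_ereal_def)
    then have "?\<alpha> ^ K \<le> ?\<alpha> ^ K * prob {\<omega>\<in>space M. 0 \<le> W \<omega>}"
      using \<alpha> by (simp add: mult_le_cancel_left1)
    also have "\<dots> = prob E'"
      unfolding E'_def prob_Int[OF borel_closed[OF closed_atLeast] borel_closed[OF closed_atLeast]]
      using prob_ge_mult_eq_pow[OF tail] h a by simp
    finally show ?thesis .
  qed
  ultimately have "geom_sum_tail a (Suc d) K \<le> (\<Sum>k<K. prob (E k)) + prob E'"
    by (simp add: geom_sum_tail.simps(2) add_mono sum_mono)
  also have "\<dots> \<le> prob {\<omega>\<in>space M. ereal (real K * h) \<le> W \<omega> + T \<omega>}"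
    unfolding E_def E'_def by (rule sum_prob_grid_cells_le_prob_add[OF T W h])
  finally show ?thesis .
qed

lemma geom_sum_tail_le_prob_sum:
  fixes T :: "nat \<Rightarrow> 'a \<Rightarrow> ereal" and q :: "nat \<Rightarrow> real"
  assumes indep: "indep_vars (\<lambda>_. borel) T I" and I: "{m<..m + d} \<subseteq> I"
    and tail: "\<And>b s. b \<in> I \<Longrightarrow> 0 \<le> s \<Longrightarrow> prob {\<omega>\<in>space M. ereal s \<le> T b \<omega>} = exp (- s * q b)"
    and h: "0 < h"
  shows "geom_sum_tail (\<lambda>d. exp (- h * q (m + d))) d K
      \<le> prob {\<omega>\<in>space M. ereal (real K * h) \<le> (\<Sum>i\<in>{m<..m + d}. T i \<omega>)}"
  using I
proof (induction d arbitrary: K)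
  case 0
  then show ?case
    by (cases K) (simp_all add: prob_space)
next
  case (Suc d)
  let ?W = "\<lambda>\<omega>. \<Sum>i\<in>{m<..m + d}. T i \<omega>"
  have "indep_var borel (T (Suc (m + d))) borel ?W"
  proof -
    have "indep_var (Pi\<^sub>M {Suc (m + d)} (\<lambda>_. borel)) (\<lambda>\<omega>. restrict (\<lambda>i. T i \<omega>) {Suc (m + d)})
        (Pi\<^sub>M {m<..m + d} (\<lambda>_. borel)) (\<lambda>\<omega>. restrict (\<lambda>i. T i \<omega>) {m<..m + d})"
      using Suc.prems by (intro indep_var_restrict[OF indep]) auto
    moreover have "(\<lambda>x. x (Suc (m + d))) \<in> measurable (Pi\<^sub>M {Suc (m + d)} (\<lambda>_. borel)) (borel :: ereal measure)"
      and "(\<lambda>x. \<Sum>i\<in>{m<..m + d}. x i) \<in> measurable (Pi\<^sub>M {m<..m + d} (\<lambda>_. borel)) (borel :: ereal measure)"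
      by measurable
    ultimately have "indep_var borel ((\<lambda>x. x (Suc (m + d))) \<circ> (\<lambda>\<omega>. restrict (\<lambda>i. T i \<omega>) {Suc (m + d)}))
        borel ((\<lambda>x. \<Sum>i\<in>{m<..m + d}. x i) \<circ> (\<lambda>\<omega>. restrict (\<lambda>i. T i \<omega>) {m<..m + d}))"
      by (rule indep_var_compose)
    then show ?thesis
      by (simp add: comp_def)
  qed
  moreover have "{m<..m + Suc d} = insert (Suc (m + d)) {m<..m + d}"
    by auto
  then have "(\<Sum>i\<in>{m<..m + Suc d}. T i \<omega>) = ?W \<omega> + T (Suc (m + d)) \<omega>" for \<omega>
    by (simp add: add.commute)
  moreover have "{m<..m + d} \<subseteq> I" "Suc (m + d) \<in> I"
    using Suc.prems by (auto simp: subset_iff)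
  moreover have "geom_sum_tail (\<lambda>d. exp (- h * q (m + d))) d N
      \<le> prob {\<omega>\<in>space M. ereal (real N * h) \<le> ?W \<omega>}" for N
    using Suc.IH calculation(3) .
  ultimately show ?case
    using tail[of "Suc (m + d)"] h
    by (simp only:) (rule geom_sum_tail_Suc_le_prob_add[where q = "q (Suc (m + d))"], auto)
qed

end

section \<open>Comparison of hitting times\<close>

lemma measure_ge_eq_if_distr_eq:
  fixes f :: "'a \<Rightarrow> 'c::linorder_topology" and g :: "'b \<Rightarrow> 'c"
  assumes "f \<in> borel_measurable M" "g \<in> borel_measurable N" "distr M borel f = distr N borel g"
  shows "measure M {x\<in>space M. c \<le> f x} = measure N {x\<in>space N. c \<le> g x}"
proof -
  have "measure M {x\<in>space M. c \<le> f x} = measure (distr M borel f) {c..}"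
    using assms(1) by (subst measure_distr) (auto intro: arg_cong[where f = "measure M"])
  also have "\<dots> = measure N {x\<in>space N. c \<le> g x}"
    using assms(2,3) by (subst assms(3), subst measure_distr) (auto intro: arg_cong[where f = "measure N"])
  finally show ?thesis .
qed

lemma exists_grid_between:
  fixes x t :: real
  assumes "0 < x" "x < t" "0 < d"
  obtains h N where "0 < h" "real N * h < t" "x \<le> real (N - d) * h"
proof -
  obtain K :: nat where K: "t / (t - x) < real K"
    using reals_Archimedean2 by blast
  have "1 < t / (t - x)"
    using assms by (simp add: field_simps)
  then have K1: "1 < real K"
    using K by linarith
  text \<open>With \<open>N = d K\<close> and \<open>(N - d) h = x\<close>, the condition \<open>N h < t\<close> reads \<open>K (t - x) > t\<close>.\<close>
  define h where "h = x / (real d * (real K - 1))"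
  have pos: "0 < real d * (real K - 1)"
    using assms K1 by simp
  have "real (d * K - d) = real d * (real K - 1)"
    using K1 by (simp add: of_nat_diff algebra_simps)
  moreover have nonzero: "real d * (real K - 1) \<noteq> 0"
    using pos by linarith
  ultimately have "real (d * K - d) * h = x"
    unfolding h_def by (simp only: times_divide_eq_right nonzero_mult_div_cancel_left[OF nonzero])
  moreover have "0 < h"
    using assms pos by (simp add: h_def)
  moreover have "real (d * K) * h < t"
  proof -
    have "real K * x < t * (real K - 1)"
      using K assms by (simp add: field_simps)
    then have "real d * (real K * x) < real d * (t * (real K - 1))"
      using assms by simp
    then show ?thesis
      using pos by (simp add: h_def field_simps)
  qed
  ultimately show ?thesis
    using that[of h "d * K"] by simp
qed

lemma (in prob_space) prob_ge_left_limit: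
  fixes Y :: "'a \<Rightarrow> ereal"
  assumes Y: "Y \<in> borel_measurable M" and t: "0 < t"
    and below: "\<And>x. 0 < x \<Longrightarrow> x < t \<Longrightarrow> c \<le> prob {\<omega>\<in>space M. ereal x \<le> Y \<omega>}"
  shows "c \<le> prob {\<omega>\<in>space M. ereal t \<le> Y \<omega>}"
proof -
  define x where "x k = t - t / real (Suc (Suc k))" for k
  have x: "0 < x k" "x k < t" for k
    using t by (auto simp: x_def field_simps add_pos_nonneg)
  have "mono x"
    unfolding x_def using t by (intro monoI diff_left_mono divide_left_mono) auto
  define B where "B k = {\<omega>\<in>space M. ereal (x k) \<le> Y \<omega>}" for k
  have B_sets: "range B \<subseteq> sets M"
    unfolding B_def using Y by auto
  have "decseq B"
    unfolding B_def using \<open>mono x\<close> by (auto simp: decseq_def mono_def elim: order_trans[rotated])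
  have "x \<longlonglongrightarrow> t - 0"
    unfolding x_def by (intro tendsto_intros LIMSEQ_Suc[OF LIMSEQ_Suc[OF lim_const_over_n]])
  then have "(\<Inter>k. B k) \<subseteq> {\<omega>\<in>space M. ereal t \<le> Y \<omega>}"
    by (auto simp: B_def intro: LIMSEQ_le_const2[OF tendsto_ereal])
  moreover have "{\<omega>\<in>space M. ereal t \<le> Y \<omega>} \<subseteq> (\<Inter>k. B k)"
  proof (intro subsetI INT_I)
    fix \<omega> k assume "\<omega> \<in> {\<omega>\<in>space M. ereal t \<le> Y \<omega>}"
    moreover have "ereal (x k) \<le> ereal t"
      using x(2)[of k] by simp
    ultimately show "\<omega> \<in> B k"
      unfolding B_def by (auto elim: order_trans[rotated])
  qed
  ultimately have "(\<Inter>k. B k) = {\<omega>\<in>space M. ereal t \<le> Y \<omega>}"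
    by blast
  moreover have "(\<lambda>k. prob (B k)) \<longlonglongrightarrow> prob (\<Inter>k. B k)"
    using B_sets \<open>decseq B\<close> by (intro finite_Lim_measure_decseq) auto
  ultimately show ?thesis
    using below x unfolding B_def by (intro LIMSEQ_le_const) auto
qed

lemma (in lambda_coalescent) prob_hitting_time_ge_le_geom_sum_tail:
  assumes h: "0 < h" and N: "real N * h < t" and mn: "m < n"
  shows "prob {\<omega>\<in>space M. ereal t \<le> hitting_time X m \<omega>}
    \<le> geom_sum_tail (\<lambda>d. exp (- h * coal_rate \<Lambda> (singletons (m + d)))) (n - m) (N - (n - m))"
proof -
  have "prob {\<omega>\<in>space M. ereal t \<le> hitting_time X m \<omega>} \<le> prob {\<omega>\<in>space M. m < card (X (real N * h) \<omega>)}"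
    using card_gt_if_ereal_le_hitting_time[OF _ _ N] h
    by (intro finite_measure_mono sets_Collect_X) auto
  also have "\<dots> \<le> geom_sum_tail (\<lambda>d. exp (- h * coal_rate \<Lambda> (singletons (m + d)))) (n - m) (N - (n - m))"
    by (rule prob_card_X_gt_le_geom_sum_tail[OF h mn])
  finally show ?thesis .
qed

lemma (in lambda_coalescent) measure_ge_eq_exp_if_distr_eq:
  assumes "2 \<le> n" "T \<in> borel_measurable N" "distr N borel T = distr M borel (hitting_time X (n - 1))"
    and "0 \<le> s"
  shows "measure N {\<omega>\<in>space N. ereal s \<le> T \<omega>} = exp (- s * coal_rate \<Lambda> (singletons n))"
  using measure_ge_eq_if_distr_eq[OF assms(2) borel_measurable_hitting_time assms(3)]
    prob_hitting_time_pred_ge[OF assms(1,4)] by simp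

lemma (in lambda_coalescent) prob_hitting_time_ge_le_prob_sum:
  assumes N: "prob_space N" and indep: "prob_space.indep_vars N (\<lambda>_. borel) T I" and I: "{m<..n} \<subseteq> I"
    and tail: "\<And>b s. b \<in> I \<Longrightarrow> 0 \<le> s
      \<Longrightarrow> measure N {\<omega>\<in>space N. ereal s \<le> T b \<omega>} = exp (- s * coal_rate \<Lambda> (singletons b))"
    and mn: "m < n" and x: "0 < x" "x < t"
  shows "prob {\<omega>\<in>space M. ereal t \<le> hitting_time X m \<omega>}
    \<le> measure N {\<omega>\<in>space N. ereal x \<le> (\<Sum>i\<in>{m<..n}. T i \<omega>)}"
proof -
  interpret N: prob_space N
    by (rule N)
  have n: "m + (n - m) = n"
    using mn by simp
  have sum_borel: "(\<lambda>\<omega>. \<Sum>i\<in>{m<..n}. T i \<omega>) \<in> borel_measurable N"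
    using I indep unfolding N.indep_vars_def by (intro borel_measurable_ereal_sum) auto
  obtain h K where h: "0 < h" "real K * h < t" "x \<le> real (K - (n - m)) * h"
    using exists_grid_between[OF x] mn by (metis zero_less_diff)
  have "prob {\<omega>\<in>space M. ereal t \<le> hitting_time X m \<omega>}
      \<le> geom_sum_tail (\<lambda>d. exp (- h * coal_rate \<Lambda> (singletons (m + d)))) (n - m) (K - (n - m))"
    by (rule prob_hitting_time_ge_le_geom_sum_tail[OF h(1,2) mn])
  also have "\<dots> \<le> measure N {\<omega>\<in>space N. ereal (real (K - (n - m)) * h) \<le> (\<Sum>i\<in>{m<..n}. T i \<omega>)}"
  proof -
    have "geom_sum_tail (\<lambda>d. exp (- h * coal_rate \<Lambda> (singletons (m + d)))) (n - m) (K - (n - m))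
        \<le> measure N {\<omega>\<in>space N. ereal (real (K - (n - m)) * h) \<le> (\<Sum>i\<in>{m<..m + (n - m)}. T i \<omega>)}"
      by (rule N.geom_sum_tail_le_prob_sum[OF indep, where q = "\<lambda>b. coal_rate \<Lambda> (singletons b)"])
         (use I tail n h in auto)
    then show ?thesis
      unfolding n .
  qed
  also have "\<dots> \<le> measure N {\<omega>\<in>space N. ereal x \<le> (\<Sum>i\<in>{m<..n}. T i \<omega>)}"
    using h(3) sum_borel by (intro N.finite_measure_mono) (auto elim: order_trans[rotated])
  finally show ?thesis .
qed

theorem lemma5p8:
  fixes \<Lambda> :: "real measure"
    and n m :: nat and t :: real
    and M :: "'a measure" and X :: "real \<Rightarrow> 'a \<Rightarrow> nat set set"
    and N :: "'b measure" and That :: "nat \<Rightarrow> 'b \<Rightarrow> ereal"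
    and M' :: "nat \<Rightarrow> 'c measure" and X' :: "nat \<Rightarrow> real \<Rightarrow> 'c \<Rightarrow> nat set set"
  assumes "lambda_measure \<Lambda>"
    and "1 \<le> m" and "m < n" and "0 < t"
    and "prob_space M" and "is_coalescent \<Lambda> n M X"
    and "prob_space N"
    and "prob_space.indep_vars N (\<lambda>_. borel) That {2..}"
    and "\<And>i. 2 \<le> i \<Longrightarrow> prob_space (M' i) \<and> is_coalescent \<Lambda> i (M' i) (X' i)
            \<and> distr N borel (That i) = distr (M' i) borel (hitting_time (X' i) (i - 1))"
  shows "measure M {\<omega>\<in>space M. ereal t \<le> hitting_time X m \<omega>}
         \<le> measure N {\<omega>\<in>space N. ereal t \<le> (\<Sum>i=m+1..n. That i \<omega>)}"
proof -
  interpret X: lambda_coalescent M \<Lambda> n X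
    using assms(1,5,6) by (simp add: lambda_coalescent_def lambda_coalescent_axioms_def)
  interpret N: prob_space N
    by (rule assms(7))
  have That_borel: "That i \<in> borel_measurable N" if "i \<in> {2..}" for i
    using assms(8) that unfolding N.indep_vars_def by auto
  have tail: "measure N {\<omega>\<in>space N. ereal s \<le> That i \<omega>} = exp (- s * coal_rate \<Lambda> (singletons i))"
    if "i \<in> {2..}" "0 \<le> s" for i s
  proof -
    interpret X': lambda_coalescent "M' i" \<Lambda> i "X' i"
      using assms(1,9) that by (simp add: lambda_coalescent_def lambda_coalescent_axioms_def)
    show ?thesis
      using X'.measure_ge_eq_exp_if_distr_eq[OF _ That_borel] assms(9) that by simp
  qed
  have "measure M {\<omega>\<in>space M. ereal t \<le> hitting_time X m \<omega>}
      \<le> measure N {\<omega>\<in>space N. ereal t \<le> (\<Sum>i\<in>{m<..n}. That i \<omega>)}"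
  proof (rule N.prob_ge_left_limit[OF _ assms(4)])
    show "(\<lambda>\<omega>. \<Sum>i\<in>{m<..n}. That i \<omega>) \<in> borel_measurable N"
      using That_borel assms(2) by (intro borel_measurable_ereal_sum) auto
    show "measure M {\<omega>\<in>space M. ereal t \<le> hitting_time X m \<omega>}
        \<le> measure N {\<omega>\<in>space N. ereal x \<le> (\<Sum>i\<in>{m<..n}. That i \<omega>)}" if "0 < x" "x < t" for x
      using assms(2) by (intro X.prob_hitting_time_ge_le_prob_sum[OF assms(7,8) _ tail assms(3) that]) auto
  qed
  moreover have "{m + 1..n} = {m<..n}"
    by auto
  ultimately show ?thesis
    by simp
qed

end
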